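(* For every $j\ge1$ there is an exact sequence of $A(2)_*$-comodules $$0\to\Sigma^{8j}N_1(j)\to N_1(2j)\to Q^{j-1}(A/\!/A(1))_*\to\Sigma^{8j+9}N_1(j-1)\to0.$$
   Context: $A_*$ is the mod $2$ dual Steenrod algebra with conjugate generators $\bar\xi_k$, $|\bar\xi_k|=2^k-1$; $A(i)_*$ is its quotient Hopf algebra dual to $A(i)$, and $(A/\!/A(i))_*=A_*\square_{A(i)_*}\mathbb{F}_2$; thus $(A/\!/A(1))_*=\mathbb{F}_2[\bar\xi_1^4,\bar\xi_2^2,\bar\xi_3,\bar\xi_4,\dots]$, $(A/\!/A(2))_*=\mathbb{F}_2[\bar\xi_1^8,\bar\xi_2^4,\bar\xi_3^2,\bar\xi_4,\dots]$, and $(A(2)/\!/A(1))_*=\Lambda[\bar\xi_1^4,\bar\xi_2^2,\bar\xi_3]$. Weight: $\bar\xi_k$ has weight $2^{k-1}$, multiplicatively. $N_i(j)\subset(A/\!/A(i))_*$ is the span of monomials of weight $\le2^{i+1}j$, $M_i(j)$ the span of monomials of weight exactly $2^{i+1}j$ (these are $A_*$-, resp. $A(i)_*$-subcomodules, and $(A/\!/A(2))_*=\bigoplus_kM_2(k)$ as $A(2)_*$-comodules). Let $\tau:(A/\!/A(1))_*\to(A/\!/A(2))_*\otimes(A(2)/\!/A(1))_*$ be the $\mathbb{F}_2$-linear isomorphism $\tau(\bar\xi_1^{8i_1+4\epsilon_1}\bar\xi_2^{4i_2+2\epsilon_2}\bar\xi_3^{2i_3+\epsilon_3}\bar\xi_4^{i_4}\cdots)=\bar\xi_1^{8i_1}\bar\xi_2^{4i_2}\bar\xi_3^{2i_3}\bar\xi_4^{i_4}\cdots\otimes\bar\xi_1^{4\epsilon_1}\bar\xi_2^{2\epsilon_2}\bar\xi_3^{\epsilon_3}$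 ($i_k\ge0$, $\epsilon_k\in\{0,1\}$). Put $F^j(A/\!/A(1))_*=\tau^{-1}\big((\bigoplus_{k\ge j}M_2(k))\otimes(A(2)/\!/A(1))_*\big)$; these form a decreasing filtration of $(A/\!/A(1))_*$ by $A(2)_*$-subcomodules, and $Q^j(A/\!/A(1))_*=(A/\!/A(1))_*/F^{j+1}(A/\!/A(1))_*$. $\Sigma^n$ shifts internal degree by $n$. *)

theory Defs
  imports Main
begin

text \<open>A monomial xibar_1^(e 1) xibar_2^(e 2) ... is an exponent function e with e 0 = 0
  and finite support.  An element of an F_2-vector space with a monomial basis is a finite
  set of basis monomials (addition = symmetric difference).\<close>

type_synonym mon = "nat \<Rightarrow> nat"

definition Amon :: "mon set" where
  "Amon = {e. e 0 = 0 \<and> finite {k. e k \<noteq> 0}}"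

definition mzero :: mon where "mzero = (\<lambda>_. 0)"

definition madd :: "mon \<Rightarrow> mon \<Rightarrow> mon" where "madd e f = (\<lambda>k. e k + f k)"

definition degree :: "mon \<Rightarrow> nat" where
  "degree e = (\<Sum>k\<in>{k. e k \<noteq> 0}. e k * (2 ^ k - 1))"

definition weight :: "mon \<Rightarrow> nat" where
  "weight e = (\<Sum>k\<in>{k. e k \<noteq> 0}. e k * 2 ^ (k - 1))"

text \<open>monomial basis of (A//A(1))_* = F_2[xibar_1^4, xibar_2^2, xibar_3, ...]\<close>
definition AA1mon :: "mon set" where
  "AA1mon = {e \<in> Amon. 4 dvd e 1 \<and> 2 dvd e 2}"

text \<open>monomial basis of (A//A(2))_* = F_2[xibar_1^8, xibar_2^4, xibar_3^2, xibar_4, ...]\<close>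
definition AA2mon :: "mon set" where
  "AA2mon = {e \<in> Amon. 8 dvd e 1 \<and> 4 dvd e 2 \<and> 2 dvd e 3}"

text \<open>monomial basis of A(2)_* = A_*/(xibar_1^8, xibar_2^4, xibar_3^2, xibar_4, ...)\<close>
definition A2mon :: "mon set" where
  "A2mon = {e \<in> Amon. e 1 < 8 \<and> e 2 < 4 \<and> e 3 < 2 \<and> (\<forall>k\<ge>4. e k = 0)}"

text \<open>linear extension over F_2 of a map given on basis elements\<close>
definition lsum :: "('a \<Rightarrow> 'b set) \<Rightarrow> 'a set \<Rightarrow> 'b set" where
  "lsum g X = {y. odd (card {x\<in>X. y \<in> g x})}"

text \<open>multiplication in A_* (x) A_* (a polynomial algebra; tensor monomials are pairs)\<close>
definition tmul :: "(mon \<times> mon) set \<Rightarrow> (mon \<times> mon) set \<Rightarrow> (mon \<times> mon) set" where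
  "tmul P Q = {m. odd (card {(p, q) \<in> P \<times> Q. (madd (fst p) (fst q), madd (snd p) (snd q)) = m})}"

primrec tpow :: "(mon \<times> mon) set \<Rightarrow> nat \<Rightarrow> (mon \<times> mon) set" where
  "tpow P 0 = {(mzero, mzero)}"
| "tpow P (Suc n) = tmul P (tpow P n)"

text \<open>the generator xibar_i as a monomial, with xibar_0 = 1\<close>
definition xi :: "nat \<Rightarrow> mon" where
  "xi i = (if i = 0 then mzero else (\<lambda>n. if n = i then 1 else 0))"

text \<open>coproduct of the conjugate generators:
  Delta(xibar_k) = sum_{i=0..k} xibar_i (x) xibar_(k-i)^(2^i)\<close>
definition Delta :: "nat \<Rightarrow> (mon \<times> mon) set" where
  "Delta k = {(xi i, \<lambda>n. 2 ^ i * xi (k - i) n) | i. i \<le> k}"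

primrec dmon :: "mon \<Rightarrow> nat \<Rightarrow> (mon \<times> mon) set" where
  "dmon e 0 = {(mzero, mzero)}"
| "dmon e (Suc n) = tmul (tpow (Delta (Suc n)) (e (Suc n))) (dmon e n)"

text \<open>coproduct of a monomial (the support of e lies in {1..degree e})\<close>
definition coprod :: "mon \<Rightarrow> (mon \<times> mon) set" where
  "coprod e = dmon e (degree e)"

text \<open>A(2)_*-coaction on (A//A(1))_*: the coproduct followed by the projection A_* -> A(2)_*
  on the left factor\<close>
definition coact2 :: "mon \<Rightarrow> (mon \<times> mon) set" where
  "coact2 e = {(a, b) \<in> coprod e. a \<in> A2mon}"

record comod =
  cbasis :: "mon set"
  cdeg   :: "mon \<Rightarrow> nat"
  ccoact :: "mon \<Rightarrow> (mon \<times> mon) set"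

definition elems :: "comod \<Rightarrow> mon set set" where
  "elems V = {X. finite X \<and> X \<subseteq> cbasis V}"

text \<open>a morphism of graded A(2)_*-comodules, given by its values on basis elements:
  degree-preserving, and (id (x) f) o psi = psi' o f\<close>
definition is_comod_mor :: "comod \<Rightarrow> comod \<Rightarrow> (mon \<Rightarrow> mon set) \<Rightarrow> bool" where
  "is_comod_mor V W f \<longleftrightarrow>
     (\<forall>b\<in>cbasis V. finite (f b) \<and> f b \<subseteq> cbasis W
        \<and> (\<forall>c\<in>f b. cdeg W c = cdeg V b)
        \<and> lsum (\<lambda>(a, c). {(a, d) | d. d \<in> f c}) (ccoact V b) = lsum (ccoact W) (f b))"

definition exact4 :: "comod \<Rightarrow> comod \<Rightarrow> comod \<Rightarrow> comod \<Rightarrow>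
    (mon \<Rightarrow> mon set) \<Rightarrow> (mon \<Rightarrow> mon set) \<Rightarrow> (mon \<Rightarrow> mon set) \<Rightarrow> bool" where
  "exact4 V1 V2 V3 V4 f1 f2 f3 \<longleftrightarrow>
     (\<forall>X\<in>elems V1. lsum f1 X = {} \<longrightarrow> X = {})
   \<and> lsum f1 ` elems V1 = {Y\<in>elems V2. lsum f2 Y = {}}
   \<and> lsum f2 ` elems V2 = {Y\<in>elems V3. lsum f3 Y = {}}
   \<and> lsum f3 ` elems V3 = elems V4"

text \<open>Sigma^s N_1(j): monomials of (A//A(1))_* of weight at most 4j\<close>
definition N1 :: "nat \<Rightarrow> mon set" where
  "N1 j = {e \<in> AA1mon. weight e \<le> 2 ^ (1 + 1) * j}"

definition SigmaN1 :: "nat \<Rightarrow> nat \<Rightarrow> comod" where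
  "SigmaN1 s j = \<lparr>cbasis = N1 j, cdeg = (\<lambda>e. degree e + s), ccoact = coact2\<rparr>"

definition M2 :: "nat \<Rightarrow> mon set" where
  "M2 k = {e \<in> AA2mon. weight e = 2 ^ (2 + 1) * k}"

definition tau1 :: "mon \<Rightarrow> mon" where
  "tau1 e = (\<lambda>k. if k = 1 then 8 * (e 1 div 8) else if k = 2 then 4 * (e 2 div 4)
               else if k = 3 then 2 * (e 3 div 2) else e k)"

definition tau2 :: "mon \<Rightarrow> mon" where
  "tau2 e = (\<lambda>k. if k = 1 then e 1 mod 8 else if k = 2 then e 2 mod 4
               else if k = 3 then e 3 mod 2 else 0)"

text \<open>basis of F^j(A//A(1))_* = tau^(-1)((sum_{k>=j} M_2(k)) (x) (A(2)//A(1))_*)\<close>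
definition Fbasis :: "nat \<Rightarrow> mon set" where
  "Fbasis j = {e \<in> AA1mon. \<exists>k\<ge>j. tau1 e \<in> M2 k}"

text \<open>Q^i(A//A(1))_* = (A//A(1))_*/F^(i+1): basis = complementary monomials,
  coaction = projection of the coaction\<close>
definition Qcomod :: "nat \<Rightarrow> comod" where
  "Qcomod i = \<lparr>cbasis = AA1mon - Fbasis (i + 1), cdeg = degree,
     ccoact = (\<lambda>e. {(a, b) \<in> coact2 e. b \<notin> Fbasis (i + 1)})\<rparr>"

end

theory Submission
imports Defs "HOL-Library.Poly_Mapping" "HOL-Library.Z2" "HOL-Library.Function_Algebras" "HOL-Library.Product_Plus"
begin

text \<open>
  F_2-vectors with a monomial basis are modelled as finitely supported functions to bit and
  A_* \<otimes> A_* as the monoid algebra R of pairs of monomials; the coaction on a monomial e is the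
  product Cop e of the coproducts of its generators, projected (pr2) to A(2)_* on the left.
  (1) Shape lemmas: right factors of terms of Cop e lie in (A//A(1))_*, have weight at most
      weight e, and for e in M_2(k) lie in M_2(k) whenever the left factor survives in A(2)_*.
      Hence F^j is a subcomodule.
  (2) lift N x = xibar_1^(N - 2 wt x) * shift x (shift: xibar_k \<mapsto> xibar_(k+1)) commutes with
      the coaction when 8 divides N: checked on algebra generators, extended multiplicatively.
  (3) For the top class t = xibar_1^4 xibar_2^2 xibar_3, the part of the coaction on m * t with
      right factors of the form m' * t is the coaction on m, times t.
  The maps are lift (8j), the projection to Q^(j-1), and lift (8(j-1)) z * t \<mapsto> z.  Each sends
  basis monomials to basis monomials or 0, so exactness is a statement about monomial bases.
\<close>


text \<open>In Defs an element of an F_2-vector space with a given basis is a finite set of basis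
  elements.  Here such an element is also viewed as a finitely supported function to bit (the
  field F_2 of HOL-Library.Z2); ind converts, and lsum becomes a sum.  Sums are then computed
  with the algebra of poly_mapping, where characteristic 2 gives u + u = 0.\<close>

text \<open>Keep 1 as a numeral, so that the index of xibar_1 is not rewritten to Suc 0.\<close>
declare One_nat_def [simp del]

abbreviation kys :: "('a \<Rightarrow>\<^sub>0 'b::zero) \<Rightarrow> 'a set" where "kys \<equiv> Poly_Mapping.keys"
abbreviation lkp :: "('a \<Rightarrow>\<^sub>0 'b::zero) \<Rightarrow> 'a \<Rightarrow> 'b" where "lkp \<equiv> Poly_Mapping.lookup"
abbreviation sng :: "'a \<Rightarrow> 'b::zero \<Rightarrow> 'a \<Rightarrow>\<^sub>0 'b" where "sng \<equiv> Poly_Mapping.single"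

lemma of_nat_bit: "(of_nat n :: bit) = (if odd n then 1 else 0)"
  by (induction n) auto

lemma pm_add_self [simp]: "(u::'a \<Rightarrow>\<^sub>0 bit) + u = 0"
  by (rule poly_mapping_eqI) (simp add: lookup_add)

lemma pm_add_self2 [simp]: "(u::'a \<Rightarrow>\<^sub>0 bit) + (u + w) = w"
  by (simp flip: add.assoc)

definition ind :: "'a set \<Rightarrow> 'a \<Rightarrow>\<^sub>0 bit" where
  "ind X = (\<Sum>x\<in>X. sng x 1)"

lemma lookup_ind: "finite X \<Longrightarrow> lkp (ind X) y = (if y \<in> X then 1 else 0)"
  unfolding ind_def by (simp add: lookup_sum lookup_single when_def)

lemma keys_ind [simp]: "finite X \<Longrightarrow> kys (ind X) = X"
  by (auto simp: in_keys_iff lookup_ind split: if_splits)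

lemma ind_inj: "finite X \<Longrightarrow> finite Y \<Longrightarrow> ind X = ind Y \<Longrightarrow> X = Y"
  by (metis keys_ind)

lemma ind_keys [simp]: "ind (kys (u::'a \<Rightarrow>\<^sub>0 bit)) = u"
  by (rule poly_mapping_eqI) (auto simp: lookup_ind in_keys_iff)

lemma ind_empty [simp]: "ind {} = 0" by (simp add: ind_def)
lemma ind_single [simp]: "ind {x} = sng x 1" by (simp add: ind_def)

lemma finite_lsum: "finite X \<Longrightarrow> (\<forall>x\<in>X. finite (g x)) \<Longrightarrow> finite (lsum g X)"
proof -
  assume a: "finite X" "\<forall>x\<in>X. finite (g x)"
  have "lsum g X \<subseteq> \<Union>(g ` X)"
  proof
    fix y assume "y \<in> lsum g X"
    then have "odd (card {x\<in>X. y \<in> g x})" by (simp add: lsum_def)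
    then have "{x\<in>X. y \<in> g x} \<noteq> {}" by (metis card.empty even_zero)
    then show "y \<in> \<Union>(g ` X)" by blast
  qed
  then show ?thesis using a by (meson finite_UN_I finite_subset)
qed

lemma ind_lsum:
  assumes "finite X" "\<forall>x\<in>X. finite (g x)"
  shows "ind (lsum g X) = (\<Sum>x\<in>X. ind (g x))"
proof (rule poly_mapping_eqI)
  fix y
  have "lkp (\<Sum>x\<in>X. ind (g x)) y = (\<Sum>x\<in>X. if y \<in> g x then 1 else 0)"
    using assms by (simp add: lookup_sum lookup_ind)
  also have "\<dots> = (\<Sum>x\<in>{x\<in>X. y \<in> g x}. (1::bit))"
    using assms(1) by (rule sum.inter_filter[symmetric])
  also have "\<dots> = (if odd (card {x\<in>X. y \<in> g x}) then 1 else 0)"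
    by (simp add: of_nat_bit)
  moreover have "lkp (ind (lsum g X)) y = (if odd (card {x\<in>X. y \<in> g x}) then 1 else 0)"
    using finite_lsum[OF assms] by (simp add: lookup_ind lsum_def)
  ultimately show "lkp (ind (lsum g X)) y = lkp (\<Sum>x\<in>X. ind (g x)) y" by simp
qed

definition Lin :: "('a \<Rightarrow> 'b set) \<Rightarrow> ('a \<Rightarrow>\<^sub>0 bit) \<Rightarrow> ('b \<Rightarrow>\<^sub>0 bit)" where
  "Lin F u = (\<Sum>k\<in>kys u. ind (F k))"

lemma bit_add_eq0: "(a::bit) + b = 0 \<longleftrightarrow> a = b"
  by (cases a; cases b) simp_all

lemma keys_add_bit: "kys ((u::'a \<Rightarrow>\<^sub>0 bit) + v) = (kys u - kys v) \<union> (kys v - kys u)"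
  by (auto simp: in_keys_iff lookup_add bit_add_eq0)

lemma sum_symdiff_char2:
  fixes f :: "'a \<Rightarrow> 'b \<Rightarrow>\<^sub>0 bit"
  assumes "finite A" "finite B"
  shows "sum f ((A - B) \<union> (B - A)) = sum f A + sum f B"
proof -
  have A: "sum f A = sum f (A - B) + sum f (A \<inter> B)"
    using assms by (metis sum.Int_Diff add.commute)
  have B: "sum f B = sum f (B - A) + sum f (A \<inter> B)"
    using assms by (metis sum.Int_Diff add.commute inf_commute)
  have "sum f ((A - B) \<union> (B - A)) = sum f (A - B) + sum f (B - A)"
    using assms by (intro sum.union_disjoint) auto
  then show ?thesis using A B by (simp add: ac_simps)
qed

lemma Lin_add: "Lin F (u + v) = Lin F u + Lin F v"
  unfolding Lin_def keys_add_bit by (simp add: sum_symdiff_char2)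

lemma Lin_zero [simp]: "Lin F 0 = 0" by (simp add: Lin_def)

lemma Lin_single [simp]: "Lin F (sng k 1) = ind (F k)"
  by (simp add: Lin_def)

lemma Lin_sum: "Lin F (sum f A) = (\<Sum>a\<in>A. Lin F (f a))"
  by (induction A rule: infinite_finite_induct) (auto simp: Lin_add)

lemma Lin_ind: "finite X \<Longrightarrow> Lin F (ind X) = (\<Sum>x\<in>X. ind (F x))"
  by (simp add: Lin_def)

lemma pm_as_sum: "(u::'a \<Rightarrow>\<^sub>0 bit) = (\<Sum>k\<in>kys u. sng k 1)"
  by (metis ind_def ind_keys)

lemma Lin_id: "Lin (\<lambda>k. {k}) u = u"
  by (simp add: Lin_def flip: pm_as_sum)

definition Lmap :: "('a \<Rightarrow> 'b) \<Rightarrow> ('a \<Rightarrow>\<^sub>0 bit) \<Rightarrow> ('b \<Rightarrow>\<^sub>0 bit)" where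
  "Lmap \<phi> = Lin (\<lambda>k. {\<phi> k})"

lemma Lmap_add: "Lmap \<phi> (u + v) = Lmap \<phi> u + Lmap \<phi> v"
  by (simp add: Lmap_def Lin_add)

lemma Lmap_single [simp]: "Lmap \<phi> (sng k 1) = sng (\<phi> k) 1"
  by (simp add: Lmap_def)

lemma Lmap_sum: "Lmap \<phi> (sum f A) = (\<Sum>a\<in>A. Lmap \<phi> (f a))"
  by (simp add: Lmap_def Lin_sum)

lemma Lmap_eq: "Lmap \<phi> u = (\<Sum>k\<in>kys u. sng (\<phi> k) 1)"
  by (simp add: Lmap_def Lin_def)

lemma Lmap_Lmap: "Lmap \<phi> (Lmap \<psi> u) = Lmap (\<phi> \<circ> \<psi>) u"
  by (simp add: Lmap_eq[of \<psi>] Lmap_sum) (simp add: Lmap_eq)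

lemma Lmap_cong: "(\<And>k. k \<in> kys u \<Longrightarrow> \<phi> k = \<psi> k) \<Longrightarrow> Lmap \<phi> u = Lmap \<psi> u"
  by (simp add: Lmap_eq)

lemma Lmap_id: "(\<And>k. k \<in> kys u \<Longrightarrow> \<phi> k = k) \<Longrightarrow> Lmap \<phi> u = u"
proof -
  assume "\<And>k. k \<in> kys u \<Longrightarrow> \<phi> k = k"
  then have "Lmap \<phi> u = Lmap (\<lambda>k. k) u" by (rule Lmap_cong)
  then show ?thesis by (simp add: Lmap_def Lin_id)
qed

lemma mult_as_sum:
  fixes u v :: "'a::comm_monoid_add \<Rightarrow>\<^sub>0 bit"
  shows "u * v = (\<Sum>k\<in>kys u. \<Sum>l\<in>kys v. sng (k + l) 1)"
proof -
  have "u * v = (\<Sum>k\<in>kys u. sng k 1) * (\<Sum>l\<in>kys v. sng l 1)"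
    by (simp flip: pm_as_sum)
  also have "\<dots> = (\<Sum>k\<in>kys u. \<Sum>l\<in>kys v. sng (k + l) 1)"
    by (simp add: sum_distrib_left sum_distrib_right mult_single) (rule sum.swap)
  finally show ?thesis .
qed

lemma Lmap_mult:
  fixes u v :: "'a::comm_monoid_add \<Rightarrow>\<^sub>0 bit"
  assumes "\<And>k l. k \<in> kys u \<Longrightarrow> l \<in> kys v \<Longrightarrow> \<phi> (k + l) = \<phi>1 k + \<phi>2 l"
  shows "Lmap (\<phi>::'a \<Rightarrow> 'b::comm_monoid_add) (u * v) = Lmap \<phi>1 u * Lmap \<phi>2 v"
proof -
  have "Lmap \<phi> (u * v) = (\<Sum>k\<in>kys u. \<Sum>l\<in>kys v. sng (\<phi>1 k + \<phi>2 l) 1)"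
    by (simp add: mult_as_sum Lmap_sum assms)
  also have "\<dots> = Lmap \<phi>1 u * Lmap \<phi>2 v"
    by (simp add: Lmap_eq sum_distrib_left sum_distrib_right mult_single) (rule sum.swap)
  finally show ?thesis .
qed


text \<open>Filt P u keeps the terms of u whose basis element satisfies P.  If the complement of P
  is an ideal of the monoid of basis elements, Filt P commutes with multiplication after
  filtering the factors; this is how the projection A_* \<rightarrow> A(2)_* is handled.\<close>

definition Filt :: "('a \<Rightarrow> bool) \<Rightarrow> ('a \<Rightarrow>\<^sub>0 bit) \<Rightarrow> ('a \<Rightarrow>\<^sub>0 bit)" where
  "Filt P u = Lin (\<lambda>k. if P k then {k} else {}) u"

lemma Filt_ind: "Filt P u = ind {k \<in> kys u. P k}"
proof -
  have "Filt P u = (\<Sum>k\<in>kys u. if P k then sng k 1 else 0)"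
    unfolding Filt_def Lin_def by (rule sum.cong) auto
  also have "\<dots> = (\<Sum>k\<in>{k \<in> kys u. P k}. sng k 1)"
    by (simp add: sum.inter_filter)
  finally show ?thesis by (simp add: ind_def)
qed

lemma keys_Filt [simp]: "kys (Filt P u) = {k \<in> kys u. P k}"
  by (simp add: Filt_ind)

lemma Filt_add: "Filt P (u + v) = Filt P u + Filt P v"
  by (simp add: Filt_def Lin_add)

lemma Filt_zero_if: "(\<And>k. k \<in> kys u \<Longrightarrow> \<not> P k) \<Longrightarrow> Filt P u = 0"
  by (simp add: Filt_def Lin_def)

lemma Filt_id_if: "(\<And>k. k \<in> kys u \<Longrightarrow> P k) \<Longrightarrow> Filt P u = u"
proof -
  assume "\<And>k. k \<in> kys u \<Longrightarrow> P k"
  then have "{k \<in> kys u. P k} = kys u" by auto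
  then show ?thesis by (simp add: Filt_ind)
qed

lemma Filt_split: "u = Filt P u + Filt (\<lambda>k. \<not> P k) u"
proof -
  have "Filt P u + Filt (\<lambda>k. \<not> P k) u = Lin (\<lambda>k. {k}) u"
    by (simp add: Filt_def Lin_def sum.distrib[symmetric] ind_def)
       (rule sum.cong, auto)
  then show ?thesis by (simp add: Lin_id)
qed

lemma keys_mult_prop:
  fixes u v :: "'a::comm_monoid_add \<Rightarrow>\<^sub>0 bit"
  assumes "m \<in> kys (u * v)"
  obtains k l where "m = k + l" "k \<in> kys u" "l \<in> kys v"
  using keys_mult[of u v] assms by blast

lemma Filt_mult:
  fixes u v :: "'a::comm_monoid_add \<Rightarrow>\<^sub>0 bit"
  assumes ideal: "\<And>k l. \<not> P k \<Longrightarrow> \<not> P (k + l)"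
  shows "Filt P (u * v) = Filt P (Filt P u * v)"
proof -
  have "Filt P (Filt (\<lambda>k. \<not> P k) u * v) = 0"
  proof (rule Filt_zero_if)
    fix m assume "m \<in> kys (Filt (\<lambda>k. \<not> P k) u * v)"
    then obtain k l where "m = k + l" "k \<in> kys (Filt (\<lambda>k. \<not> P k) u)"
      by (metis keys_mult_prop)
    then show "\<not> P m" using ideal by auto
  qed
  then show ?thesis
    by (subst Filt_split[of u P]) (simp add: distrib_right Filt_add)
qed

lemma Filt_mult2:
  fixes u v :: "'a::comm_monoid_add \<Rightarrow>\<^sub>0 bit"
  assumes ideal: "\<And>k l. \<not> P k \<Longrightarrow> \<not> P (k + l)"
  shows "Filt P (u * v) = Filt P (Filt P u * Filt P v)"
proof -
  have "Filt P (u * v) = Filt P (Filt P u * v)" by (rule Filt_mult[of P, OF ideal])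
  also have "\<dots> = Filt P (v * Filt P u)" by (simp only: mult.commute)
  also have "\<dots> = Filt P (Filt P v * Filt P u)" by (rule Filt_mult[of P, OF ideal])
  finally show ?thesis by (simp only: mult.commute)
qed

lemma Filt_Filt [simp]: "Filt P (Filt P u) = Filt P u"
  by (rule Filt_id_if) simp

definition allkeys :: "('a \<Rightarrow> bool) \<Rightarrow> ('a \<Rightarrow>\<^sub>0 bit) \<Rightarrow> bool" where
  "allkeys P u \<longleftrightarrow> (\<forall>k\<in>kys u. P k)"

lemma allkeys_mult:
  fixes u v :: "'a::comm_monoid_add \<Rightarrow>\<^sub>0 bit"
  assumes "allkeys A u" "allkeys B v" "\<And>k l. A k \<Longrightarrow> B l \<Longrightarrow> C (k + l)"
  shows "allkeys C (u * v)"
  using assms unfolding allkeys_def by (metis keys_mult_prop)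

lemma allkeys_Filt: "allkeys A u \<Longrightarrow> allkeys A (Filt P u)"
  by (simp add: allkeys_def)

lemma allkeys_single [simp]: "allkeys A (sng k 1) \<longleftrightarrow> A k"
  by (simp add: allkeys_def)

lemma allkeys_add: "allkeys A u \<Longrightarrow> allkeys A v \<Longrightarrow> allkeys A (u + v)"
  using keys_add[of u v] by (auto simp: allkeys_def)

lemma allkeys_zero [simp]: "allkeys A 0" by (simp add: allkeys_def)

lemma allkeys_sum: "(\<And>i. i \<in> I \<Longrightarrow> allkeys A (f i)) \<Longrightarrow> allkeys A (sum f I)"
  by (induction I rule: infinite_finite_induct) (auto intro: allkeys_add)

lemma madd_eq: "madd e f = e + f" by (simp add: madd_def plus_fun_def)
lemma mzero_eq: "mzero = 0" by (simp add: mzero_def zero_fun_def)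

definition finsupp :: "mon set" where "finsupp = {e. finite {k. e k \<noteq> 0}}"

lemma Amon_finsupp: "e \<in> Amon \<Longrightarrow> e \<in> finsupp" by (simp add: Amon_def finsupp_def)

lemma finsupp_add: "e \<in> finsupp \<Longrightarrow> f \<in> finsupp \<Longrightarrow> e + f \<in> finsupp"
proof -
  assume "e \<in> finsupp" "f \<in> finsupp"
  moreover have "{k. (e + f) k \<noteq> 0} \<subseteq> {k. e k \<noteq> 0} \<union> {k. f k \<noteq> 0}" by auto
  ultimately show ?thesis unfolding finsupp_def by (auto intro: finite_subset)
qed

lemma Amon_add [intro]: "e \<in> Amon \<Longrightarrow> f \<in> Amon \<Longrightarrow> e + f \<in> Amon"
  using finsupp_add[of e f] by (auto simp: Amon_def finsupp_def)

lemma zero_Amon [simp]: "(0::mon) \<in> Amon" by (simp add: Amon_def)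

lemma weight_sum: "e \<in> finsupp \<Longrightarrow> finite S \<Longrightarrow> {k. e k \<noteq> 0} \<subseteq> S \<Longrightarrow>
    weight e = (\<Sum>k\<in>S. e k * 2 ^ (k - 1))"
  unfolding weight_def by (rule sum.mono_neutral_left) (auto simp: finsupp_def)

lemma degree_sum: "e \<in> finsupp \<Longrightarrow> finite S \<Longrightarrow> {k. e k \<noteq> 0} \<subseteq> S \<Longrightarrow>
    degree e = (\<Sum>k\<in>S. e k * (2 ^ k - 1))"
  unfolding Defs.degree_def by (rule sum.mono_neutral_left) (auto simp: finsupp_def)

lemma weight_add: "e \<in> finsupp \<Longrightarrow> f \<in> finsupp \<Longrightarrow> weight (e + f) = weight e + weight f"
proof -
  assume a: "e \<in> finsupp" "f \<in> finsupp"
  let ?S = "{k. e k \<noteq> 0} \<union> {k. f k \<noteq> 0}"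
  have fin: "finite ?S" using a by (simp add: finsupp_def)
  have "weight (e + f) = (\<Sum>k\<in>?S. (e + f) k * 2 ^ (k - 1))"
    by (rule weight_sum[OF finsupp_add[OF a] fin]) auto
  also have "\<dots> = (\<Sum>k\<in>?S. e k * 2 ^ (k - 1)) + (\<Sum>k\<in>?S. f k * 2 ^ (k - 1))"
    by (simp add: algebra_simps sum.distrib)
  also have "\<dots> = weight e + weight f"
    using weight_sum[OF a(1) fin] weight_sum[OF a(2) fin] by auto
  finally show ?thesis .
qed

lemma degree_add: "e \<in> finsupp \<Longrightarrow> f \<in> finsupp \<Longrightarrow> degree (e + f) = degree e + degree f"
proof -
  assume a: "e \<in> finsupp" "f \<in> finsupp"
  let ?S = "{k. e k \<noteq> 0} \<union> {k. f k \<noteq> 0}"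
  have fin: "finite ?S" using a by (simp add: finsupp_def)
  have "degree (e + f) = (\<Sum>k\<in>?S. (e + f) k * (2 ^ k - 1))"
    by (rule degree_sum[OF finsupp_add[OF a] fin]) auto
  also have "\<dots> = (\<Sum>k\<in>?S. e k * (2 ^ k - 1)) + (\<Sum>k\<in>?S. f k * (2 ^ k - 1))"
    by (simp add: add_mult_distrib sum.distrib)
  also have "\<dots> = degree e + degree f"
    using degree_sum[OF a(1) fin] degree_sum[OF a(2) fin] by auto
  finally show ?thesis .
qed

lemma weight_zero [simp]: "weight 0 = 0" by (simp add: weight_def)

lemma weight_eq_0: "e \<in> Amon \<Longrightarrow> weight e = 0 \<Longrightarrow> e = 0"
proof (rule ccontr)
  assume a: "e \<in> Amon" "weight e = 0" "e \<noteq> 0"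
  then obtain k where k: "e k \<noteq> 0" by (auto simp: fun_eq_iff)
  have fin: "finite {k. e k \<noteq> 0}" using a by (simp add: Amon_def)
  have "e k * 2 ^ (k - 1) \<le> weight e"
    unfolding weight_def by (rule member_le_sum) (use k fin in auto)
  then show False using k a by simp
qed

definition smul :: "nat \<Rightarrow> mon \<Rightarrow> mon" where "smul c e = (\<lambda>k. c * e k)"

lemma smul_apply [simp]: "smul c e k = c * e k" by (simp add: smul_def)

definition mon3 :: "nat \<Rightarrow> nat \<Rightarrow> nat \<Rightarrow> mon" where
  "mon3 a b c = (\<lambda>k. if k = 1 then a else if k = 2 then b else if k = 3 then c else 0)"

lemma mon3_apply [simp]: "mon3 a b c 0 = 0" "mon3 a b c 1 = a" "mon3 a b c 2 = b" "mon3 a b c 3 = c"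
  "k \<ge> 4 \<Longrightarrow> mon3 a b c k = 0"
  by (auto simp: mon3_def)

lemma mon3_add [simp]: "mon3 a b c + mon3 a' b' c' = mon3 (a + a') (b + b') (c + c')"
  by (auto simp: mon3_def fun_eq_iff)

lemma mon3_eq_iff [simp]: "mon3 a b c = mon3 a' b' c' \<longleftrightarrow> a = a' \<and> b = b' \<and> c = c'"
proof
  assume h: "mon3 a b c = mon3 a' b' c'"
  have "mon3 a b c 1 = mon3 a' b' c' 1" "mon3 a b c 2 = mon3 a' b' c' 2" "mon3 a b c 3 = mon3 a' b' c' 3"
    using h by simp_all
  then show "a = a' \<and> b = b' \<and> c = c'" by simp
qed simp

lemma mon3_zero [simp]: "mon3 0 0 0 = 0" by (auto simp: mon3_def fun_eq_iff)

lemma mon3_eq_zero_iff [simp]: "mon3 a b c = 0 \<longleftrightarrow> a = 0 \<and> b = 0 \<and> c = 0"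
  using mon3_eq_iff[of a b c 0 0 0] by simp

lemma supp_mon3: "{k. mon3 a b c k \<noteq> 0} \<subseteq> {1, 2, 3}" by (auto simp: mon3_def)

lemma mon3_Amon [simp]: "mon3 a b c \<in> Amon"
  unfolding Amon_def using supp_mon3[of a b c] by (auto intro: finite_subset)

lemma mon3_finsupp [simp]: "mon3 a b c \<in> finsupp" using Amon_finsupp by simp

lemma weight_mon3 [simp]: "weight (mon3 a b c) = a + 2 * b + 4 * c"
  by (subst weight_sum[OF mon3_finsupp _ supp_mon3]) auto

lemma degree_mon3 [simp]: "degree (mon3 a b c) = a + 3 * b + 7 * c"
  by (subst degree_sum[OF mon3_finsupp _ supp_mon3]) auto

lemma mon3_A2mon [simp]: "mon3 a b c \<in> A2mon \<longleftrightarrow> a < 8 \<and> b < 4 \<and> c < 2"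
  by (auto simp: A2mon_def)

lemma mon3_AA1mon [simp]: "mon3 a b c \<in> AA1mon \<longleftrightarrow> 4 dvd a \<and> 2 dvd b"
  by (auto simp: AA1mon_def)

lemma mon3_AA2mon [simp]: "mon3 a b c \<in> AA2mon \<longleftrightarrow> 8 dvd a \<and> 4 dvd b \<and> 2 dvd c"
  by (auto simp: AA2mon_def)

lemma xi_apply: "xi i k = (if i \<noteq> 0 \<and> k = i then 1 else 0)"
  by (simp add: xi_def mzero_def)

lemma xi_0 [simp]: "xi 0 = 0" by (simp add: xi_def mzero_eq)
lemma xi_1: "xi 1 = mon3 1 0 0" by (auto simp: xi_def mon3_def fun_eq_iff)
lemma xi_Suc0: "xi (Suc 0) = mon3 1 0 0" by (auto simp: xi_def mon3_def fun_eq_iff)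
lemma xi_2: "xi 2 = mon3 0 1 0" by (auto simp: xi_def mon3_def fun_eq_iff)
lemma xi_3: "xi 3 = mon3 0 0 1" by (auto simp: xi_def mon3_def fun_eq_iff)

lemmas xi_simps = xi_1 xi_2 xi_3 xi_Suc0

lemma smul_mon3 [simp]: "smul c (mon3 a b d) = mon3 (c * a) (c * b) (c * d)"
  by (auto simp: mon3_def fun_eq_iff)

lemma smul_zero [simp]: "smul c 0 = 0" "smul 0 e = 0" by (auto simp: fun_eq_iff)
lemma smul_one [simp]: "smul 1 e = e" by (auto simp: fun_eq_iff)

lemma smul_smul: "smul c (smul d e) = smul (c * d) e" by (auto simp: fun_eq_iff)

lemma supp_xi: "{k. xi i k \<noteq> 0} \<subseteq> {i}" by (auto simp: xi_apply)

lemma xi_Amon [simp]: "xi i \<in> Amon"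
  unfolding Amon_def using supp_xi[of i] by (auto intro: finite_subset simp: xi_apply)

lemma smul_Amon [simp]: "e \<in> Amon \<Longrightarrow> smul c e \<in> Amon"
proof -
  assume "e \<in> Amon"
  moreover have "{k. smul c e k \<noteq> 0} \<subseteq> {k. e k \<noteq> 0}" by auto
  ultimately show ?thesis unfolding Amon_def by (auto intro: finite_subset)
qed

lemma weight_smul_xi [simp]: "weight (smul c (xi k)) = (if k = 0 then 0 else c * 2 ^ (k - 1))"
proof -
  have "{n. smul c (xi k) n \<noteq> 0} \<subseteq> {k}" by (auto simp: xi_apply)
  then show ?thesis
    by (subst weight_sum[of _ "{k}"]) (auto intro: Amon_finsupp simp: xi_apply)
qed

lemma xi_A2mon [simp]: "xi i \<in> A2mon \<longleftrightarrow> i \<le> 3"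
proof
  assume "xi i \<in> A2mon"
  then have "\<forall>k\<ge>4. xi i k = 0" by (simp add: A2mon_def)
  then show "i \<le> 3" by (cases "i \<le> 3") (auto simp: xi_apply dest: spec[of _ i])
next
  assume "i \<le> 3"
  then have "i = 0 \<or> i = 1 \<or> i = 2 \<or> i = 3" by auto
  then show "xi i \<in> A2mon" by (auto simp: xi_1 xi_2 xi_3 A2mon_def)
qed

text \<open>A(2)_* = A_*/(xibar_1^8, xibar_2^4, xibar_3^2, xibar_4, ...): a product of monomials
  survives only if each factor does.\<close>

lemma A2mon_add_left: "a + b \<in> A2mon \<Longrightarrow> a \<in> A2mon"
proof -
  assume h: "a + b \<in> A2mon"
  have "{k. a k \<noteq> 0} \<subseteq> {k. (a + b) k \<noteq> 0}" by auto
  with h show ?thesis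
    unfolding A2mon_def Amon_def by (auto intro: finite_subset)
qed

lemma A2mon_add_right: "a + b \<in> A2mon \<Longrightarrow> b \<in> A2mon"
  using A2mon_add_left[of b a] by (simp add: add.commute)

lemma AA1mon_add [intro]: "e \<in> AA1mon \<Longrightarrow> f \<in> AA1mon \<Longrightarrow> e + f \<in> AA1mon"
  by (auto simp: AA1mon_def)

lemma AA2mon_add [intro]: "e \<in> AA2mon \<Longrightarrow> f \<in> AA2mon \<Longrightarrow> e + f \<in> AA2mon"
  by (auto simp: AA2mon_def)

lemma AA2_AA1: "e \<in> AA2mon \<Longrightarrow> e \<in> AA1mon"
  by (auto simp: AA2mon_def AA1mon_def elim: dvd_trans[rotated])

lemma AA1_Amon: "e \<in> AA1mon \<Longrightarrow> e \<in> Amon" by (simp add: AA1mon_def)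
lemma AA2_Amon: "e \<in> AA2mon \<Longrightarrow> e \<in> Amon" by (simp add: AA2mon_def)
lemma zero_AA1 [simp]: "(0::mon) \<in> AA1mon" by (simp add: AA1mon_def)
lemma zero_AA2 [simp]: "(0::mon) \<in> AA2mon" by (simp add: AA2mon_def)
lemma zero_A2 [simp]: "(0::mon) \<in> A2mon" by (simp add: A2mon_def)

definition shift :: "mon \<Rightarrow> mon" where "shift x = (\<lambda>k. if k \<le> 1 then 0 else x (k - 1))"

lemma shift_0 [simp]: "shift x 0 = 0" by (simp add: shift_def)
lemma shift_Suc [simp]: "shift x (Suc k) = (if k = 0 then 0 else x k)" by (simp add: shift_def)

lemma shift_add: "shift (x + y) = shift x + shift y" by (auto simp: shift_def fun_eq_iff)
lemma shift_zero [simp]: "shift 0 = 0" by (auto simp: shift_def fun_eq_iff)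
lemma shift_mon3_0: "shift (mon3 a b 0) = mon3 0 a b"
  by (auto simp: shift_def mon3_def fun_eq_iff)
lemma shift_smul_xi: "1 \<le> k \<Longrightarrow> shift (smul c (xi k)) = smul c (xi (Suc k))"
  by (auto simp: shift_def xi_apply fun_eq_iff)

lemma shift_Amon [simp]: "x \<in> Amon \<Longrightarrow> shift x \<in> Amon"
proof -
  assume a: "x \<in> Amon"
  have "{k. shift x k \<noteq> 0} \<subseteq> Suc ` {k. x k \<noteq> 0}"
  proof
    fix k assume "k \<in> {k. shift x k \<noteq> 0}"
    then have "k > 1" "x (k - 1) \<noteq> 0" by (auto simp: shift_def split: if_splits)
    then have "k = Suc (k - 1)" "k - 1 \<in> {k. x k \<noteq> 0}" by auto
    then show "k \<in> Suc ` {k. x k \<noteq> 0}" by (metis image_eqI)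
  qed
  with a show ?thesis unfolding Amon_def by (auto intro: finite_subset)
qed

lemma Amon_bound: "x \<in> Amon \<Longrightarrow> \<exists>B. {k. x k \<noteq> 0} \<subseteq> {..<B}"
proof -
  assume "x \<in> Amon"
  then have f: "finite (insert 0 {k. x k \<noteq> 0})" by (simp add: Amon_def)
  have "{k. x k \<noteq> 0} \<subseteq> {..<Suc (Max (insert 0 {k. x k \<noteq> 0}))}"
    using Max_ge[OF f] by (auto simp: less_Suc_eq_le)
  then show ?thesis by blast
qed

lemma weight_shift: "x \<in> Amon \<Longrightarrow> weight (shift x) = 2 * weight x"
proof -
  assume a: "x \<in> Amon"
  obtain B where B: "{k. x k \<noteq> 0} \<subseteq> {..<B}" using Amon_bound[OF a] by blast
  have x0: "x 0 = 0" using a by (simp add: Amon_def)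
  have sB: "{k. shift x k \<noteq> 0} \<subseteq> {..<Suc B}" using B by (auto simp: shift_def)
  have "weight (shift x) = (\<Sum>k<Suc B. shift x k * 2 ^ (k - 1))"
    by (rule weight_sum[OF Amon_finsupp[OF shift_Amon[OF a]] _ sB]) simp
  also have "\<dots> = (\<Sum>k<B. shift x (Suc k) * 2 ^ k)"
    by (subst sum.lessThan_Suc_shift) simp
  also have "\<dots> = (\<Sum>k<B. 2 * (x k * 2 ^ (k - 1)))"
  proof (rule sum.cong)
    fix k show "shift x (Suc k) * 2 ^ k = 2 * (x k * 2 ^ (k - 1))"
      by (cases k) (auto simp: x0)
  qed simp
  also have "\<dots> = 2 * weight x"
    by (simp add: sum_distrib_left weight_sum[OF Amon_finsupp[OF a] _ B])
  finally show ?thesis .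
qed

lemma degree_shift: "x \<in> Amon \<Longrightarrow> degree (shift x) = degree x + 2 * weight x"
proof -
  assume a: "x \<in> Amon"
  obtain B where B: "{k. x k \<noteq> 0} \<subseteq> {..<B}" using Amon_bound[OF a] by blast
  have x0: "x 0 = 0" using a by (simp add: Amon_def)
  have sB: "{k. shift x k \<noteq> 0} \<subseteq> {..<Suc B}" using B by (auto simp: shift_def)
  have "degree (shift x) = (\<Sum>k<Suc B. shift x k * (2 ^ k - 1))"
    by (rule degree_sum[OF Amon_finsupp[OF shift_Amon[OF a]] _ sB]) simp
  also have "\<dots> = (\<Sum>k<B. shift x (Suc k) * (2 ^ Suc k - 1))"
    by (subst sum.lessThan_Suc_shift) simp
  also have "\<dots> = (\<Sum>k<B. x k * (2 ^ k - 1) + 2 * (x k * 2 ^ (k - 1)))"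
  proof (rule sum.cong)
    fix k assume "k \<in> {..<B}"
    show "shift x (Suc k) * (2 ^ Suc k - 1) = x k * (2 ^ k - 1) + 2 * (x k * 2 ^ (k - 1))"
    proof (cases k)
      case 0 then show ?thesis by (simp add: x0)
    next
      case (Suc m)
      have p: "(1::nat) \<le> 2 ^ m" by simp
      have "(2::nat) ^ Suc (Suc m) - 1 = (2 ^ Suc m - 1) + 2 * 2 ^ m"
        using p by simp
      then show ?thesis using Suc by (simp add: algebra_simps)
    qed
  qed simp
  also have "\<dots> = degree x + 2 * weight x"
    by (simp add: sum.distrib sum_distrib_left weight_sum[OF Amon_finsupp[OF a] _ B]
        degree_sum[OF Amon_finsupp[OF a] _ B])
  finally show ?thesis .
qed


text \<open>R is the monoid algebra over F_2 of pairs of monomials, i.e. A_* \<otimes> A_* with T a c = a \<otimes> c.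
  The set-level coproduct coprod of Defs corresponds to the product Cop e of the coproducts
  Del k = Delta(xibar_k), raised to the exponents of e.\<close>

type_synonym R = "(mon \<times> mon) \<Rightarrow>\<^sub>0 bit"

abbreviation T :: "mon \<Rightarrow> mon \<Rightarrow> R" where "T a c \<equiv> sng (a, c) 1"

lemma fst_plus_prod: "fst (p + q) = fst p + fst q" by (simp add: plus_prod_def)
lemma snd_plus_prod: "snd (p + q) = snd p + snd q" by (simp add: plus_prod_def)
lemma pair_plus: "(a, c) + (a', c') = (a + a', c + c')" by (simp add: plus_prod_def)

lemma one_T: "(1::R) = T 0 0"
  by (rule poly_mapping_eqI) (auto simp: lookup_one lookup_single zero_prod_def when_def)

lemma T_mult: "T a c * T a' c' = T (a + a') (c + c')"
  by (simp add: mult_single pair_plus)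

lemma ind_prod_mult:
  assumes "finite P" "finite Q"
  shows "ind P * ind Q = (\<Sum>pq\<in>P \<times> Q. sng (fst pq + snd pq) (1::bit))"
proof -
  have "ind P * ind Q = (\<Sum>p\<in>P. \<Sum>q\<in>Q. sng (p + q) (1::bit))"
    by (simp add: ind_def sum_distrib_left sum_distrib_right mult_single) (rule sum.swap)
  also have "\<dots> = (\<Sum>pq\<in>P \<times> Q. sng (fst pq + snd pq) 1)"
    by (simp add: sum.cartesian_product split_def)
  finally show ?thesis .
qed

lemma tmul_lsum: "tmul P Q = lsum (\<lambda>pq. {fst pq + snd pq}) (P \<times> Q)"
proof -
  have "\<And>m. {(p, q) \<in> P \<times> Q. (madd (fst p) (fst q), madd (snd p) (snd q)) = m}
          = {x \<in> P \<times> Q. m \<in> {fst x + snd x}}"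
    by (auto simp: madd_eq plus_prod_def)
  then show ?thesis by (simp add: tmul_def lsum_def)
qed

lemma tmul_ind:
  assumes "finite P" "finite Q"
  shows "finite (tmul P Q) \<and> ind (tmul P Q) = ind P * ind Q"
proof
  show "finite (tmul P Q)" unfolding tmul_lsum by (rule finite_lsum) (use assms in auto)
  have "ind (tmul P Q) = (\<Sum>pq\<in>P \<times> Q. ind {fst pq + snd pq})"
    unfolding tmul_lsum by (rule ind_lsum) (use assms in auto)
  also have "\<dots> = ind P * ind Q" by (simp add: ind_prod_mult[OF assms])
  finally show "ind (tmul P Q) = ind P * ind Q" .
qed

lemma tpow_ind:
  assumes "finite P"
  shows "finite (tpow P n) \<and> ind (tpow P n) = ind P ^ n"
proof (induction n)
  case 0
  have "(mzero, mzero) = (0::mon \<times> mon)" by (simp add: mzero_eq zero_prod_def)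
  then show ?case by (simp add: one_poly_mapping_def)
next
  case (Suc n)
  then show ?case using tmul_ind[OF assms, of "tpow P n"] by simp
qed

lemma finite_Delta [simp]: "finite (Delta k)"
proof -
  have "Delta k = (\<lambda>i. (xi i, \<lambda>n. 2 ^ i * xi (k - i) n)) ` {..k}" by (auto simp: Delta_def)
  then show ?thesis by simp
qed

text \<open>Delta(xibar_k) as an element of R; its k + 1 terms are distinct since the xi i are.\<close>

definition Del :: "nat \<Rightarrow> R" where "Del k = ind (Delta k)"

lemma xi_inj: "xi i = xi j \<Longrightarrow> i = j"
proof (rule ccontr)
  assume h: "xi i = xi j" "i \<noteq> j"
  then have "i \<noteq> 0 \<or> j \<noteq> 0" by linarith
  then show False
  proof
    assume "i \<noteq> 0" then have "xi i i = 1" by (simp add: xi_apply)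
    moreover have "xi j i = 0" using h(2) by (simp add: xi_apply)
    ultimately show False using h by simp
  next
    assume "j \<noteq> 0" then have "xi j j = 1" by (simp add: xi_apply)
    moreover have "xi i j = 0" using h(2) by (simp add: xi_apply)
    ultimately show False using h by simp
  qed
qed

lemma Del_sum: "Del k = (\<Sum>i\<le>k. T (xi i) (smul (2 ^ i) (xi (k - i))))"
proof -
  have eq: "Delta k = (\<lambda>i. (xi i, smul (2 ^ i) (xi (k - i)))) ` {..k}"
    by (auto simp: Delta_def smul_def)
  have inj: "inj_on (\<lambda>i. (xi i, smul (2 ^ i) (xi (k - i)))) {..k}"
    by (auto intro: inj_onI dest: xi_inj)
  show ?thesis unfolding Del_def eq ind_def by (simp add: sum.reindex[OF inj])
qed

lemma dmon_ind: "finite (dmon e n) \<and> ind (dmon e n) = (\<Prod>k\<in>{1..n}. Del k ^ e k)"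
proof (induction n)
  case 0
  have "(mzero, mzero) = (0::mon \<times> mon)" by (simp add: mzero_eq zero_prod_def)
  then show ?case by (simp add: one_poly_mapping_def)
next
  case (Suc n)
  have f: "finite (tpow (Delta (Suc n)) (e (Suc n)))" "ind (tpow (Delta (Suc n)) (e (Suc n))) = Del (Suc n) ^ e (Suc n)"
    using tpow_ind[of "Delta (Suc n)"] by (auto simp: Del_def)
  show ?case using Suc tmul_ind[OF f(1), of "dmon e n"] f
    by (simp add: prod.cl_ivl_Suc mult.commute)
qed

text \<open>The coproduct of e; it agrees with coprod e of Defs because the support of e lies in
  {1..degree e}.\<close>

definition Cop :: "mon \<Rightarrow> R" where "Cop e = (\<Prod>k\<in>{k. e k \<noteq> 0}. Del k ^ e k)"

lemma Cop_on_superset: "e \<in> finsupp \<Longrightarrow> finite S \<Longrightarrow> {k. e k \<noteq> 0} \<subseteq> S \<Longrightarrow> Cop e = (\<Prod>k\<in>S. Del k ^ e k)"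
  unfolding Cop_def by (rule prod.mono_neutral_left) (auto simp: finsupp_def)

lemma supp_degree: "e \<in> Amon \<Longrightarrow> {k. e k \<noteq> 0} \<subseteq> {1..degree e}"
proof
  fix k assume a: "e \<in> Amon" and k: "k \<in> {k. e k \<noteq> 0}"
  then have k1: "k \<ge> 1" by (cases k) (auto simp: Amon_def)
  have fin: "finite {k. e k \<noteq> 0}" using a by (simp add: Amon_def)
  have "e k * (2 ^ k - 1) \<le> degree e"
    unfolding Defs.degree_def by (rule member_le_sum) (use k fin in auto)
  moreover have "k \<le> 2 ^ k - 1" using less_exp[of k] by linarith
  moreover have "2 ^ k - 1 \<le> e k * (2 ^ k - 1)"
    using k mult_le_mono1[of 1 "e k" "2 ^ k - 1"] by simp
  ultimately have "k \<le> degree e" by linarith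
  then show "k \<in> {1..degree e}" using k1 by simp
qed

lemma coprod_Cop: "e \<in> Amon \<Longrightarrow> finite (coprod e) \<and> ind (coprod e) = Cop e"
  using dmon_ind[of e "degree e"] Cop_on_superset[OF Amon_finsupp _ supp_degree]
  by (simp add: coprod_def)

lemma Cop_zero [simp]: "Cop 0 = 1" by (simp add: Cop_def)

lemma Cop_add: "e \<in> finsupp \<Longrightarrow> f \<in> finsupp \<Longrightarrow> Cop (e + f) = Cop e * Cop f"
proof -
  assume a: "e \<in> finsupp" "f \<in> finsupp"
  let ?S = "{k. e k \<noteq> 0} \<union> {k. f k \<noteq> 0}"
  have fin: "finite ?S" using a by (simp add: finsupp_def)
  have "Cop (e + f) = (\<Prod>k\<in>?S. Del k ^ (e + f) k)"
    by (rule Cop_on_superset[OF finsupp_add[OF a] fin]) auto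
  also have "\<dots> = (\<Prod>k\<in>?S. Del k ^ e k) * (\<Prod>k\<in>?S. Del k ^ f k)"
    by (simp add: power_add prod.distrib)
  also have "\<dots> = Cop e * Cop f"
    using Cop_on_superset[OF a(1) fin] Cop_on_superset[OF a(2) fin] by auto
  finally show ?thesis .
qed

lemma Cop_smul_xi: "Cop (smul c (xi k)) = (if k = 0 then 1 else Del k ^ c)"
proof -
  have s: "{n. smul c (xi k) n \<noteq> 0} \<subseteq> {k}" by (auto simp: xi_apply)
  show ?thesis
    by (subst Cop_on_superset[OF Amon_finsupp _ s]) (auto simp: xi_apply)
qed

lemma Cop_xi: "k \<noteq> 0 \<Longrightarrow> Cop (xi k) = Del k"
  using Cop_smul_xi[of 1 k] by (simp del: smul_apply add: smul_def)

lemma Cop_mon3: "Cop (mon3 a b c) = Del 1 ^ a * Del 2 ^ b * Del 3 ^ c"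
  by (subst Cop_on_superset[OF mon3_finsupp _ supp_mon3]) auto

text \<open>Squaring is additive in characteristic 2, which gives the coproduct of xibar_k^(2^r).\<close>

lemma frob2: "((u::R) + v) ^ 2 = u ^ 2 + v ^ 2"
proof -
  have "(u + v) ^ 2 = u ^ 2 + v ^ 2 + (u * v + u * v)" by (simp add: power2_eq_square algebra_simps)
  then show ?thesis by simp
qed

lemma frob2_sum: "(sum (f::'i \<Rightarrow> R) I) ^ 2 = (\<Sum>i\<in>I. f i ^ 2)"
  by (induction I rule: infinite_finite_induct) (auto simp: frob2)

lemma frob_sum: "(sum (f::'i \<Rightarrow> R) I) ^ (2 ^ r) = (\<Sum>i\<in>I. f i ^ (2 ^ r))"
proof (induction r)
  case 0 then show ?case by simp
next
  case (Suc r)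
  have "(sum f I) ^ (2 ^ Suc r) = ((sum f I) ^ (2 ^ r)) ^ 2" by (simp add: power_mult[symmetric] mult.commute)
  also have "\<dots> = (\<Sum>i\<in>I. (f i ^ (2 ^ r)) ^ 2)" by (simp add: Suc frob2_sum)
  also have "\<dots> = (\<Sum>i\<in>I. f i ^ (2 ^ Suc r))" by (simp add: power_mult[symmetric] mult.commute)
  finally show ?case .
qed

lemma T_power: "T a c ^ n = T (smul n a) (smul n c)"
proof (induction n)
  case 0 then show ?case using smul_zero(2)[of a] smul_zero(2)[of c] by (simp only: power_0 one_T)
next
  case (Suc n)
  have e: "a + smul n a = smul (Suc n) a" "c + smul n c = smul (Suc n) c" by (auto simp: fun_eq_iff)
  show ?case by (simp only: power_Suc Suc.IH T_mult e)
qed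

lemma Del_pow2: "Del k ^ (2 ^ r) = (\<Sum>i\<le>k. T (smul (2 ^ r) (xi i)) (smul (2 ^ r * 2 ^ i) (xi (k - i))))"
  by (simp add: Del_sum frob_sum T_power smul_smul)


lemma atMost_one_nat: "{..(1::nat)} = {0, 1}" by auto

lemmas atMost_small = atMost_nat_numeral atMost_one_nat

lemma Del1_4: "Del 1 ^ 4 = T 0 (mon3 4 0 0) + T (mon3 4 0 0) 0"
  using Del_pow2[of 1 2] by (simp add: atMost_small xi_simps ac_simps)

lemma Del1_8: "Del 1 ^ 8 = T 0 (mon3 8 0 0) + T (mon3 8 0 0) 0"
  using Del_pow2[of 1 3] by (simp add: atMost_small xi_simps ac_simps)

lemma Del2_2: "Del 2 ^ 2 = T 0 (mon3 0 2 0) + T (mon3 2 0 0) (mon3 4 0 0) + T (mon3 0 2 0) 0"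
  using Del_pow2[of 2 1] by (simp add: atMost_small xi_simps ac_simps)

lemma Del2_4: "Del 2 ^ 4 = T 0 (mon3 0 4 0) + T (mon3 4 0 0) (mon3 8 0 0) + T (mon3 0 4 0) 0"
  using Del_pow2[of 2 2] by (simp add: atMost_small xi_simps ac_simps)

lemma Del3_1: "Del 3 = T 0 (mon3 0 0 1) + T (mon3 1 0 0) (mon3 0 2 0) + T (mon3 0 1 0) (mon3 4 0 0) + T (mon3 0 0 1) 0"
  using Del_pow2[of 3 0] by (simp add: atMost_small xi_simps ac_simps)

lemma Del3_2: "Del 3 ^ 2 = T 0 (mon3 0 0 2) + T (mon3 2 0 0) (mon3 0 4 0) + T (mon3 0 2 0) (mon3 8 0 0) + T (mon3 0 0 2) 0"
  using Del_pow2[of 3 1] by (simp add: atMost_small xi_simps ac_simps)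

text \<open>pr2 projects the left tensor factor A_* \<rightarrow> A(2)_*.  Its kernel is spanned by an ideal of
  monomials, so pr2 is compatible with products; pr2 (Cop e) is the coaction coact2 e of Defs.\<close>

definition pr2 :: "R \<Rightarrow> R" where "pr2 u = Filt (\<lambda>k. fst k \<in> A2mon) u"

lemma pr2_ideal: "\<not> fst k \<in> A2mon \<Longrightarrow> \<not> fst (k + l) \<in> A2mon"
  using A2mon_add_left by (auto simp: fst_plus_prod)

lemma pr2_mult: "pr2 (u * v) = pr2 (pr2 u * pr2 v)"
  unfolding pr2_def by (rule Filt_mult2) (rule pr2_ideal)

lemma pr2_mult1: "pr2 (u * v) = pr2 (pr2 u * v)"
  unfolding pr2_def by (rule Filt_mult) (rule pr2_ideal)

lemma pr2_pr2 [simp]: "pr2 (pr2 u) = pr2 u" by (simp add: pr2_def)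
lemma pr2_zero [simp]: "pr2 0 = 0" by (simp add: pr2_def Filt_def)
lemma pr2_add: "pr2 (u + v) = pr2 u + pr2 v" by (simp add: pr2_def Filt_add)
lemma pr2_sum: "pr2 (sum f I) = (\<Sum>i\<in>I. pr2 (f i))"
  by (induction I rule: infinite_finite_induct) (auto simp: pr2_add)

lemma pr2_T: "pr2 (T a c) = (if a \<in> A2mon then T a c else 0)"
proof (cases "a \<in> A2mon")
  case True
  then have "{k \<in> kys (T a c). fst k \<in> A2mon} = {(a, c)}" by auto
  then show ?thesis using True by (simp add: pr2_def Filt_ind)
next
  case False
  then show ?thesis unfolding pr2_def by (subst Filt_zero_if) auto
qed

lemma keys_pr2: "kys (pr2 u) = {k \<in> kys u. fst k \<in> A2mon}" by (simp add: pr2_def)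

lemma coact2_Cop: "e \<in> Amon \<Longrightarrow> finite (coact2 e) \<and> ind (coact2 e) = pr2 (Cop e)"
proof -
  assume a: "e \<in> Amon"
  have c: "coprod e = kys (Cop e)" using coprod_Cop[OF a] by (metis keys_ind)
  have "coact2 e = {k \<in> kys (Cop e). fst k \<in> A2mon}" by (auto simp: coact2_def c)
  then show ?thesis by (simp add: pr2_def Filt_ind)
qed

lemma pr2_single: "pr2 (sng k 1) = (if fst k \<in> A2mon then sng k 1 else 0)"
  using pr2_T[of "fst k" "snd k"] by simp

lemma pr2_Lmap:
  assumes "\<And>k. fst (\<phi> k) = fst k"
  shows "pr2 (Lmap \<phi> u) = Lmap \<phi> (pr2 u)"
proof -
  have "pr2 (Lmap \<phi> u) = (\<Sum>k\<in>kys u. pr2 (sng (\<phi> k) 1))" by (simp add: Lmap_eq pr2_sum)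
  also have "\<dots> = (\<Sum>k\<in>kys u. Lmap \<phi> (pr2 (sng k 1)))"
    by (rule sum.cong) (auto simp: pr2_single assms Lmap_def)
  also have "\<dots> = Lmap \<phi> (pr2 u)"
    by (subst (2) pm_as_sum[of u]) (simp add: pr2_sum Lmap_sum)
  finally show ?thesis .
qed

text \<open>A family of key predicates A w indexed by a weight w is additive if A m k and A n l imply
  A (m + n) (k + l).  For such families the key properties of a product follow from those of its
  factors; this is how all shape statements about coproducts of monomials below are proved.\<close>

lemma allkeys_power_w:
  fixes u :: "'a::comm_monoid_add \<Rightarrow>\<^sub>0 bit"
  assumes "allkeys (A w) u" "\<And>k l m n. A m k \<Longrightarrow> A n l \<Longrightarrow> A (m + n) (k + l)" "A 0 0"
  shows "allkeys (A (n * w)) (u ^ n)"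
proof (induction n)
  case 0 then show ?case using assms(3) by (simp add: allkeys_def)
next
  case (Suc n)
  have "allkeys (A (w + n * w)) (u * u ^ n)"
    by (rule allkeys_mult[OF assms(1) Suc]) (rule assms(2))
  then show ?case by simp
qed

lemma allkeys_prod:
  fixes f :: "'i \<Rightarrow> ('a::comm_monoid_add \<Rightarrow>\<^sub>0 bit)"
  assumes add: "\<And>k l m n. A m k \<Longrightarrow> A n l \<Longrightarrow> A (m + n) (k + l)" and z: "A 0 0"
    and h: "\<And>i. i \<in> S \<Longrightarrow> allkeys (A (w i)) (f i)"
  shows "allkeys (A (\<Sum>i\<in>S. w i)) (\<Prod>i\<in>S. f i)"
  using h
proof (induction S rule: infinite_finite_induct)
  case (infinite S) then show ?case using z by (simp add: allkeys_def)
next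
  case empty then show ?case using z by (simp add: allkeys_def)
next
  case (insert x F)
  have "allkeys (A (w x + (\<Sum>i\<in>F. w i))) (f x * (\<Prod>i\<in>F. f i))"
    by (rule allkeys_mult[OF insert.prems[of x] insert.IH]) (use insert.prems add in auto)
  then show ?case using insert by simp
qed

text \<open>The weight of a monomial is the sum of the weights of its factors xibar_k^(e k), so an
  additive key family holds for Cop e at weight (weight e) once it holds factor by factor.\<close>

lemma allkeys_Cop:
  assumes add: "\<And>k l m n. A m k \<Longrightarrow> A n l \<Longrightarrow> A (m + n) (k + l)" and z: "A 0 0"
    and factor: "\<And>k. e k \<noteq> 0 \<Longrightarrow> allkeys (A (e k * 2 ^ (k - 1))) (Del k ^ e k)"
  shows "allkeys (A (weight e)) (Cop e)"
  using allkeys_prod[of A, OF add z, of "{k. e k \<noteq> 0}" "\<lambda>k. e k * 2 ^ (k - 1)"] factor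
  by (simp add: Cop_def weight_def)

lemma allkeys_Del_power:
  assumes add: "\<And>k l m n. A m k \<Longrightarrow> A n l \<Longrightarrow> A (m + n) (k + l)" and z: "A 0 0"
    and "d dvd n" "allkeys (A w) (Del k ^ d)"
  shows "allkeys (A (n div d * w)) (Del k ^ n)"
proof -
  have "Del k ^ n = (Del k ^ d) ^ (n div d)" using \<open>d dvd n\<close> by (simp flip: power_mult)
  then show ?thesis using allkeys_power_w[OF assms(4) add z, of "n div d"] by simp
qed

lemma allkeys_Del_pow2:
  assumes "\<forall>i\<in>{..k}. P (smul (2 ^ r) (xi i), smul (2 ^ r * 2 ^ i) (xi (k - i)))"
  shows "allkeys P (Del k ^ (2 ^ r))"
  unfolding Del_pow2 by (rule allkeys_sum) (use assms in auto)

lemma keys_Del: "kys (Del k) = Delta k" by (simp add: Del_def)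

lemma Del_keys_form: "(a, c) \<in> kys (Del k) \<Longrightarrow> \<exists>i\<le>k. a = xi i \<and> c = smul (2 ^ i) (xi (k - i))"
  by (auto simp: keys_Del Delta_def smul_def)

lemma weight_Del_key:
  assumes "i \<le> k" "k \<ge> 1"
  shows "weight (smul (2 ^ i) (xi (k - i))) = (if i = k then 0 else 2 ^ (k - 1))"
proof -
  have "i < k \<Longrightarrow> 2 ^ i * 2 ^ (k - i - 1) = (2::nat) ^ (k - 1)"
    by (simp flip: power_add)
  then show ?thesis using assms by auto
qed

lemma dvd_pow2: "a \<le> b \<Longrightarrow> (2::nat) ^ a dvd 2 ^ b" by (simp add: le_imp_power_dvd)

lemma smul_xi_AA1: "smul c (xi m) \<in> AA1mon \<longleftrightarrow> (m = 1 \<longrightarrow> 4 dvd c) \<and> (m = 2 \<longrightarrow> 2 dvd c)"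
  by (auto simp: AA1mon_def xi_apply)

lemma smul_xi_AA2: "smul c (xi m) \<in> AA2mon \<longleftrightarrow> (m = 1 \<longrightarrow> 8 dvd c) \<and> (m = 2 \<longrightarrow> 4 dvd c) \<and> (m = 3 \<longrightarrow> 2 dvd c)"
  by (auto simp: AA2mon_def xi_apply)

definition wt_key :: "nat \<Rightarrow> mon \<times> mon \<Rightarrow> bool" where
  "wt_key w k \<longleftrightarrow> snd k \<in> Amon \<and> weight (snd k) \<le> w"

lemma wt_key_add: "wt_key m k \<Longrightarrow> wt_key n l \<Longrightarrow> wt_key (m + n) (k + l)"
  by (auto simp: wt_key_def snd_plus_prod weight_add Amon_finsupp)

lemma wt_key_0: "wt_key 0 0" by (simp add: wt_key_def zero_prod_def)

lemma wt_key_Del: "k \<ge> 1 \<Longrightarrow> allkeys (wt_key (2 ^ (k - 1))) (Del k)"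
  unfolding allkeys_def
proof
  fix q assume k: "k \<ge> 1" and q: "q \<in> kys (Del k)"
  obtain a c where ac: "q = (a, c)" by (cases q)
  then obtain i where i: "i \<le> k" "c = smul (2 ^ i) (xi (k - i))" using Del_keys_form q by blast
  then show "wt_key (2 ^ (k - 1)) q" using ac weight_Del_key[OF i(1) k] by (simp add: wt_key_def)
qed

lemma keys_cop_weight: "e \<in> Amon \<Longrightarrow> allkeys (wt_key (weight e)) (Cop e)"
proof (rule allkeys_Cop[OF wt_key_add wt_key_0])
  fix k assume "e \<in> Amon" "e k \<noteq> 0"
  then have "k \<ge> 1" by (cases k) (auto simp: Amon_def)
  then show "allkeys (wt_key (e k * 2 ^ (k - 1))) (Del k ^ e k)"
    by (intro allkeys_power_w[OF wt_key_Del wt_key_add wt_key_0])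
qed

lemma keys_coact_weight: "x \<in> Amon \<Longrightarrow> allkeys (wt_key (weight x)) (pr2 (Cop x))"
  unfolding pr2_def by (rule allkeys_Filt) (rule keys_cop_weight)

definition AA1_key :: "mon \<times> mon \<Rightarrow> bool" where "AA1_key k \<longleftrightarrow> snd k \<in> AA1mon"

lemma AA1_key_add: "AA1_key k \<Longrightarrow> AA1_key l \<Longrightarrow> AA1_key (k + l)"
  by (auto simp: AA1_key_def snd_plus_prod)

lemma AA1_key_0: "AA1_key 0" by (simp add: AA1_key_def zero_prod_def)

lemma AA1_key_Delk: "k \<ge> 3 \<Longrightarrow> allkeys AA1_key (Del k)"
  unfolding allkeys_def
proof
  fix q assume k: "k \<ge> 3" and q: "q \<in> kys (Del k)"
  obtain a c where ac: "q = (a, c)" by (cases q)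
  then obtain i where i: "i \<le> k" "c = smul (2 ^ i) (xi (k - i))" using Del_keys_form q by blast
  have "k - i = 1 \<Longrightarrow> (4::nat) dvd 2 ^ i" using dvd_pow2[of 2 i] i k by simp
  moreover have "k - i = 2 \<Longrightarrow> (2::nat) dvd 2 ^ i" using dvd_pow2[of 1 i] i k by simp
  ultimately show "AA1_key q" using ac i by (simp add: AA1_key_def smul_xi_AA1)
qed

lemma keys_cop_AA1: "e \<in> AA1mon \<Longrightarrow> allkeys AA1_key (Cop e)"
proof -
  assume e: "e \<in> AA1mon"
  let ?A = "\<lambda>_::nat. AA1_key"
  have add: "\<And>k l m n. ?A m k \<Longrightarrow> ?A n l \<Longrightarrow> ?A (m + n) (k + l)" by (rule AA1_key_add)
  have "allkeys (?A (weight e)) (Cop e)"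
  proof (rule allkeys_Cop[OF add AA1_key_0])
    fix k assume "e k \<noteq> 0"
    then have "k = 1 \<or> k = 2 \<or> k \<ge> 3" using e by (cases k) (auto simp: AA1mon_def Amon_def)
    then show "allkeys (?A (e k * 2 ^ (k - 1))) (Del k ^ e k)"
    proof (elim disjE)
      assume k: "k = 1"
      have "allkeys AA1_key (Del 1 ^ 2 ^ 2)"
        by (rule allkeys_Del_pow2) (simp add: atMost_small AA1_key_def smul_xi_AA1 xi_simps)
      then show ?thesis using allkeys_Del_power[OF add AA1_key_0, of 4 "e 1"] e k
        by (simp add: AA1mon_def)
    next
      assume k: "k = 2"
      have "allkeys AA1_key (Del 2 ^ 2 ^ 1)"
        by (rule allkeys_Del_pow2) (simp add: atMost_small AA1_key_def smul_xi_AA1 xi_simps)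
      then show ?thesis using allkeys_Del_power[OF add AA1_key_0, of 2 "e 2"] e k
        by (simp add: AA1mon_def)
    next
      assume "k \<ge> 3"
      then show ?thesis using allkeys_power_w[OF AA1_key_Delk add AA1_key_0] by simp
    qed
  qed
  then show ?thesis by simp
qed

definition AA2_key :: "nat \<Rightarrow> mon \<times> mon \<Rightarrow> bool" where
  "AA2_key w k \<longleftrightarrow> (fst k \<in> A2mon \<longrightarrow> snd k \<in> AA2mon \<and> weight (snd k) = w)"

lemma AA2_key_add: "AA2_key m k \<Longrightarrow> AA2_key n l \<Longrightarrow> AA2_key (m + n) (k + l)"
  unfolding AA2_key_def fst_plus_prod snd_plus_prod
  by (auto dest: A2mon_add_left A2mon_add_right simp: weight_add Amon_finsupp AA2_Amon)

lemma AA2_key_0: "AA2_key 0 0" by (simp add: AA2_key_def zero_prod_def)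

lemma AA2_key_Delk: "k \<ge> 4 \<Longrightarrow> allkeys (AA2_key (2 ^ (k - 1))) (Del k)"
  unfolding allkeys_def
proof
  fix q assume k: "k \<ge> 4" and q: "q \<in> kys (Del k)"
  obtain a c where ac: "q = (a, c)" by (cases q)
  then obtain i where i: "i \<le> k" "a = xi i" "c = smul (2 ^ i) (xi (k - i))" using Del_keys_form q by blast
  show "AA2_key (2 ^ (k - 1)) q"
  proof (cases "i \<le> 3")
    case True
    have "k - i = 1 \<Longrightarrow> (8::nat) dvd 2 ^ i" using dvd_pow2[of 3 i] i k by simp
    moreover have "k - i = 2 \<Longrightarrow> (4::nat) dvd 2 ^ i" using dvd_pow2[of 2 i] i k by simp
    moreover have "k - i = 3 \<Longrightarrow> (2::nat) dvd 2 ^ i" using dvd_pow2[of 1 i] i k by simp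
    moreover have "weight c = 2 ^ (k - 1)" using weight_Del_key[OF i(1)] k True i by simp
    ultimately show ?thesis using ac i by (simp add: AA2_key_def smul_xi_AA2)
  next
    case False
    then show ?thesis using ac i by (simp add: AA2_key_def)
  qed
qed

lemma keys_cop_AA2: "m \<in> AA2mon \<Longrightarrow> allkeys (AA2_key (weight m)) (Cop m)"
proof (rule allkeys_Cop[OF AA2_key_add AA2_key_0])
  fix k assume m: "m \<in> AA2mon" and "m k \<noteq> 0"
  then have "k = 1 \<or> k = 2 \<or> k = 3 \<or> k \<ge> 4" by (cases k) (auto simp: AA2mon_def Amon_def)
  then show "allkeys (AA2_key (m k * 2 ^ (k - 1))) (Del k ^ m k)"
  proof (elim disjE)
    assume k: "k = 1"
    have "allkeys (AA2_key 8) (Del 1 ^ 2 ^ 3)"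
      by (rule allkeys_Del_pow2) (simp add: atMost_small AA2_key_def xi_simps)
    then have "allkeys (AA2_key (m 1 div 8 * 8)) (Del 1 ^ m 1)"
      using m by (intro allkeys_Del_power[OF AA2_key_add AA2_key_0]) (simp_all add: AA2mon_def)
    then show ?thesis using m k by (simp add: AA2mon_def)
  next
    assume k: "k = 2"
    have "allkeys (AA2_key 8) (Del 2 ^ 2 ^ 2)"
      by (rule allkeys_Del_pow2) (simp add: atMost_small AA2_key_def xi_simps)
    then have "allkeys (AA2_key (m 2 div 4 * 8)) (Del 2 ^ m 2)"
      using m by (intro allkeys_Del_power[OF AA2_key_add AA2_key_0]) (simp_all add: AA2mon_def)
    then show ?thesis using m k by (auto simp: AA2mon_def mult.commute elim!: dvdE)
  next
    assume k: "k = 3"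
    have "allkeys (AA2_key 8) (Del 3 ^ 2 ^ 1)"
      by (rule allkeys_Del_pow2) (simp add: atMost_small AA2_key_def xi_simps)
    then have "allkeys (AA2_key (m 3 div 2 * 8)) (Del 3 ^ m 3)"
      using m by (intro allkeys_Del_power[OF AA2_key_add AA2_key_0]) (simp_all add: AA2mon_def)
    then show ?thesis using m k by (auto simp: AA2mon_def mult.commute elim!: dvdE)
  next
    assume "k \<ge> 4"
    then show ?thesis using allkeys_power_w[OF AA2_key_Delk AA2_key_add AA2_key_0] by simp
  qed
qed


text \<open>Each monomial of (A//A(1))_* factors uniquely as tau1 e * tau2 e with tau1 e in (A//A(2))_*
  and tau2 e in (A(2)//A(1))_*, a monomial xibar_1^a xibar_2^b xibar_3^c with a in {0,4},
  b in {0,2}, c in {0,1}.  Hence weight (tau2 e) \<le> 12 and weight (tau1 e) is divisible by 8.\<close>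

lemma tau2_mon3: "tau2 e = mon3 (e 1 mod 8) (e 2 mod 4) (e 3 mod 2)"
  by (auto simp: tau2_def mon3_def fun_eq_iff)

lemma tau_split: "tau1 e + tau2 e = e"
  by (auto simp: tau1_def tau2_def fun_eq_iff)

lemma tau1_apply: "tau1 e 1 = 8 * (e 1 div 8)" "tau1 e 2 = 4 * (e 2 div 4)" "tau1 e 3 = 2 * (e 3 div 2)"
  "k \<noteq> 1 \<Longrightarrow> k \<noteq> 2 \<Longrightarrow> k \<noteq> 3 \<Longrightarrow> tau1 e k = e k"
  by (auto simp: tau1_def)

lemma tau1_AA2: "e \<in> Amon \<Longrightarrow> tau1 e \<in> AA2mon"
proof -
  assume a: "e \<in> Amon"
  have sub: "{k. tau1 e k \<noteq> 0} \<subseteq> {k. e k \<noteq> 0}" by (auto simp: tau1_def split: if_splits)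
  have fin: "finite {k. e k \<noteq> 0}" and z: "e 0 = 0" using a by (auto simp: Amon_def)
  have "finite {k. tau1 e k \<noteq> 0}" using finite_subset[OF sub fin] .
  moreover have "tau1 e 0 = 0" using z by (simp add: tau1_def)
  ultimately have "finite {k. tau1 e k \<noteq> 0}" "tau1 e 0 = 0" by auto
  then show ?thesis unfolding AA2mon_def Amon_def by (simp add: tau1_apply)
qed

lemma tau2_AA1: "e \<in> AA1mon \<Longrightarrow> tau2 e \<in> AA1mon"
  by (auto simp: tau2_mon3 AA1mon_def dvd_mod)

lemma weight_tau: "e \<in> Amon \<Longrightarrow> weight e = weight (tau1 e) + weight (tau2 e)"
  by (metis tau_split weight_add Amon_finsupp tau1_AA2 AA2_Amon mon3_finsupp tau2_mon3)

lemma degree_tau: "e \<in> Amon \<Longrightarrow> degree e = degree (tau1 e) + degree (tau2 e)"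
  by (metis tau_split degree_add Amon_finsupp tau1_AA2 AA2_Amon mon3_finsupp tau2_mon3)

lemma mod8_cases: "4 dvd (x::nat) \<Longrightarrow> x mod 8 = 0 \<or> x mod 8 = 4"
  by presburger

lemma mod4_cases: "2 dvd (x::nat) \<Longrightarrow> x mod 4 = 0 \<or> x mod 4 = 2"
  by presburger

lemma mod2_cases: "(x::nat) mod 2 = 0 \<or> x mod 2 = 1"
  by presburger

lemma weight_tau2_le: "e \<in> AA1mon \<Longrightarrow> weight (tau2 e) \<le> 12"
  using mod8_cases[of "e 1"] mod4_cases[of "e 2"] mod2_cases[of "e 3"]
  by (auto simp: tau2_mon3 AA1mon_def)

definition top_mon :: mon where "top_mon = mon3 4 2 1"

lemma tau1_add_AA2: "m \<in> AA2mon \<Longrightarrow> tau1 (m + c) = m + tau1 c"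
  by (auto simp: tau1_def fun_eq_iff AA2mon_def elim!: dvdE)

lemma tau2_add_AA2: "m \<in> AA2mon \<Longrightarrow> tau2 (m + c) = tau2 c"
  by (auto simp: tau2_def fun_eq_iff AA2mon_def elim!: dvdE)

lemma tau1_AA2_id: "m \<in> AA2mon \<Longrightarrow> tau1 m = m"
  by (auto simp: tau1_def fun_eq_iff AA2mon_def dvd_mult_div_cancel)

lemma tau1_top [simp]: "tau1 top_mon = 0"
  by (auto simp: tau1_def top_mon_def fun_eq_iff mon3_def)

lemma tau2_top [simp]: "tau2 top_mon = top_mon"
  by (simp add: tau2_mon3 top_mon_def)

lemma top_AA1 [simp]: "top_mon \<in> AA1mon" by (simp add: top_mon_def)
lemma top_Amon [simp]: "top_mon \<in> Amon" by (simp add: top_mon_def)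
lemma weight_top [simp]: "weight top_mon = 12" by (simp add: top_mon_def)
lemma degree_top [simp]: "degree top_mon = 17" by (simp add: top_mon_def)

lemma weight_AA2_dvd: "m \<in> AA2mon \<Longrightarrow> 8 dvd weight m"
proof -
  assume m: "m \<in> AA2mon"
  have "8 dvd (\<Sum>k\<in>{k. m k \<noteq> 0}. m k * 2 ^ (k - 1))"
  proof (rule dvd_sum)
    fix k assume "k \<in> {k. m k \<noteq> 0}"
    then have "k \<ge> 1" using m by (cases k) (auto simp: AA2mon_def Amon_def)
    then have "k = 1 \<or> k = 2 \<or> k = 3 \<or> k \<ge> 4" by auto
    then show "8 dvd m k * 2 ^ (k - 1)"
    proof (elim disjE)
      assume "k \<ge> 4"
      then have "(8::nat) dvd 2 ^ (k - 1)" using dvd_pow2[of 3 "k - 1"] by simp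
      then show ?thesis by simp
    next
      assume "k = 1" then show ?thesis using m by (simp add: AA2mon_def)
    next
      assume "k = 2"
      then have "m k * 2 ^ (k - 1) = m 2 * 2" by simp
      moreover have "8 dvd m 2 * 2" using m by (auto simp: AA2mon_def elim!: dvdE)
      ultimately show ?thesis by simp
    next
      assume "k = 3"
      then have "m k * 2 ^ (k - 1) = m 3 * 4" by simp
      moreover have "8 dvd m 3 * 4" using m by (auto simp: AA2mon_def elim!: dvdE)
      ultimately show ?thesis by simp
    qed
  qed
  then show ?thesis by (simp add: weight_def)
qed

lemma weight_AA1_dvd: "x \<in> AA1mon \<Longrightarrow> 4 dvd weight x"
proof -
  assume x: "x \<in> AA1mon"
  have "4 dvd weight (tau1 x)" using weight_AA2_dvd[OF tau1_AA2[OF AA1_Amon[OF x]]] by (auto elim!: dvdE)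
  moreover have "4 dvd weight (tau2 x)"
    using mod8_cases[of "x 1"] mod4_cases[of "x 2"] mod2_cases[of "x 3"] x
    by (auto simp: tau2_mon3 AA1mon_def)
  ultimately show ?thesis by (simp add: weight_tau[OF AA1_Amon[OF x]])
qed

lemma M2_iff: "m \<in> M2 k \<longleftrightarrow> m \<in> AA2mon \<and> weight m = 8 * k"
  by (simp add: M2_def)

lemma N1_iff: "e \<in> N1 j \<longleftrightarrow> e \<in> AA1mon \<and> weight e \<le> 4 * j"
  by (simp add: N1_def)

lemma Fbasis_iff: "e \<in> Fbasis j \<longleftrightarrow> e \<in> AA1mon \<and> 8 * j \<le> weight (tau1 e)"
proof
  assume "e \<in> Fbasis j"
  then show "e \<in> AA1mon \<and> 8 * j \<le> weight (tau1 e)" by (auto simp: Fbasis_def M2_iff)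
next
  assume h: "e \<in> AA1mon \<and> 8 * j \<le> weight (tau1 e)"
  then have t: "tau1 e \<in> AA2mon" using tau1_AA2 AA1_Amon by blast
  then obtain k where k: "weight (tau1 e) = 8 * k" using weight_AA2_dvd by (blast elim: dvdE)
  then have "k \<ge> j" using h by simp
  then show "e \<in> Fbasis j" using h t k by (auto simp: Fbasis_def M2_iff)
qed

text \<open>By the shape lemmas, a term of the coaction on tau1 b * tau2 b has right factor
  m * c with m in M_2(wt (tau1 b)/8) and c in (A//A(1))_*; so tau1 of it has weight at least
  weight (tau1 b).\<close>

lemma keys_pr2_prod:
  assumes "q \<in> kys (pr2 (u * v))"
  obtains k l where "q = k + l" "k \<in> kys u" "l \<in> kys v" "fst k \<in> A2mon" "fst l \<in> A2mon"
proof -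
  have "q \<in> kys (u * v)" "fst q \<in> A2mon" using assms by (auto simp: keys_pr2)
  then obtain k l where "q = k + l" "k \<in> kys u" "l \<in> kys v" by (metis keys_mult_prop)
  moreover have s: "fst k + fst l \<in> A2mon" using \<open>fst q \<in> A2mon\<close> arg_cong[OF calculation(1), of fst]
    by simp
  ultimately show ?thesis using that A2mon_add_left[OF s] A2mon_add_right[OF s] by blast
qed

lemma Fbasis_subcomodule:
  assumes b: "b \<in> Fbasis j" and q: "(a, c) \<in> kys (pr2 (Cop b))"
  shows "c \<in> Fbasis j"
proof -
  have bA: "b \<in> AA1mon" using b by (simp add: Fbasis_iff)
  let ?m = "tau1 b" and ?t = "tau2 b"
  have mA: "?m \<in> AA2mon" using tau1_AA2 AA1_Amon bA by blast
  have tA: "?t \<in> AA1mon" using tau2_AA1 bA by blast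
  have "Cop b = Cop (?m + ?t)" by (simp add: tau_split)
  also have "\<dots> = Cop ?m * Cop ?t"
    by (rule Cop_add) (use mA tA in \<open>auto intro: Amon_finsupp AA2_Amon AA1_Amon\<close>)
  finally have "Cop b = Cop ?m * Cop ?t" .
  then have q': "(a, c) \<in> kys (pr2 (Cop ?m * Cop ?t))" using q by simp
  obtain k l where kl: "(a, c) = k + l" "k \<in> kys (Cop ?m)" "l \<in> kys (Cop ?t)" "fst k \<in> A2mon" "fst l \<in> A2mon"
    by (rule keys_pr2_prod[OF q'])
  have k1: "snd k \<in> AA2mon" "weight (snd k) = weight ?m"
    using keys_cop_AA2[OF mA] kl by (auto simp: allkeys_def AA2_key_def)
  have l1: "snd l \<in> AA1mon" using keys_cop_AA1[OF tA] kl by (auto simp: allkeys_def AA1_key_def)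
  have c: "c = snd k + snd l" using arg_cong[OF kl(1), of snd] by simp
  have "tau1 c = snd k + tau1 (snd l)" using c tau1_add_AA2[OF k1(1)] by simp
  then have "weight (tau1 c) = weight (snd k) + weight (tau1 (snd l))"
    using k1(1) l1 by (simp add: weight_add Amon_finsupp AA2_Amon tau1_AA2 AA1_Amon)
  moreover have "8 * j \<le> weight ?m" using b by (simp add: Fbasis_iff)
  moreover have "c \<in> AA1mon" using c k1 l1 AA2_AA1 by blast
  ultimately show ?thesis using k1 by (simp add: Fbasis_iff)
qed


text \<open>With N = 8j it maps the monomial
  basis of N_1(j) bijectively onto that of M_2(j), and it is a map of A(2)_*-comodules up to the
  degree shift by N: this is the first map of the exact sequence.\<close>

definition lift :: "nat \<Rightarrow> mon \<Rightarrow> mon" where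
  "lift N x = mon3 (N - 2 * weight x) 0 0 + shift x"

definition lift_right :: "nat \<Rightarrow> mon \<times> mon \<Rightarrow> mon \<times> mon" where
  "lift_right N k = (fst k, lift N (snd k))"

lemma lift_right_fst [simp]: "fst (lift_right N k) = fst k" by (simp add: lift_right_def)

lemma lift_Amon [simp]: "x \<in> Amon \<Longrightarrow> lift N x \<in> Amon"
  by (simp add: lift_def Amon_add)

lemma lift_zero [simp]: "lift N 0 = mon3 N 0 0"
  by (auto simp: lift_def shift_def mon3_def fun_eq_iff)

lemma lift_add:
  assumes "x \<in> Amon" "y \<in> Amon" "2 * weight x \<le> N" "2 * weight y \<le> M"
  shows "lift (N + M) (x + y) = lift N x + lift M y"
proof -
  have w: "weight (x + y) = weight x + weight y"
    using assms by (simp add: weight_add Amon_finsupp)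
  have "N + M - 2 * weight (x + y) = (N - 2 * weight x) + (M - 2 * weight y)"
    using assms w by simp
  then show ?thesis by (simp add: lift_def shift_add ac_simps)
qed

lemma lift_apply: "lift N x 1 = N - 2 * weight x" "k \<ge> 2 \<Longrightarrow> lift N x k = x (k - 1)" "lift N x 0 = 0"
  by (auto simp: lift_def shift_def mon3_def)

lemma weight_lift: "x \<in> Amon \<Longrightarrow> 2 * weight x \<le> N \<Longrightarrow> weight (lift N x) = N"
  by (simp add: lift_def weight_add Amon_finsupp weight_shift)

lemma degree_lift: "x \<in> Amon \<Longrightarrow> 2 * weight x \<le> N \<Longrightarrow> degree (lift N x) = N + degree x"
  by (simp add: lift_def degree_add Amon_finsupp degree_shift)

lemma lift_AA2: "x \<in> AA1mon \<Longrightarrow> 8 dvd N \<Longrightarrow> 2 * weight x \<le> N \<Longrightarrow> lift N x \<in> AA2mon"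
proof -
  assume x: "x \<in> AA1mon" and N: "8 dvd N" "2 * weight x \<le> N"
  have "8 dvd 2 * weight x" using weight_AA1_dvd[OF x] by (auto elim!: dvdE)
  then have "8 dvd N - 2 * weight x" using N by (simp add: dvd_diff_nat)
  moreover have "lift N x 2 = x 1" "lift N x 3 = x 2" by (simp_all add: lift_def shift_def One_nat_def)
  moreover have "lift N x \<in> Amon" using x by (simp add: AA1mon_def)
  ultimately show ?thesis using x by (simp add: AA2mon_def AA1mon_def lift_apply)
qed

text \<open>Since weights add under multiplication of monomials, lift_right is multiplicative on
  tensors whose right factors have bounded weight.\<close>

lemma Lmap_lift_right_mult:
  assumes "allkeys (wt_key w1) u" "allkeys (wt_key w2) v" "2 * w1 \<le> N" "2 * w2 \<le> M"
  shows "Lmap (lift_right (N + M)) (u * v) = Lmap (lift_right N) u * Lmap (lift_right M) v"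
proof (rule Lmap_mult)
  fix k l assume "k \<in> kys u" "l \<in> kys v"
  then have "wt_key w1 k" "wt_key w2 l" using assms by (auto simp: allkeys_def)
  then show "lift_right (N + M) (k + l) = lift_right N k + lift_right M l"
    using assms by (auto simp: wt_key_def lift_right_def pair_plus lift_add)
qed

definition lifts_coact :: "nat \<Rightarrow> mon \<Rightarrow> bool" where
  "lifts_coact N x \<longleftrightarrow> pr2 (Cop (lift N x)) = Lmap (lift_right N) (pr2 (Cop x))"

text \<open>Compatibility is multiplicative: the coaction is an algebra map and lift is additive in
  both arguments.\<close>

lemma lifts_coact_add:
  assumes x: "x \<in> Amon" "2 * weight x \<le> N" "lifts_coact N x"
    and y: "y \<in> Amon" "2 * weight y \<le> M" "lifts_coact M y"
  shows "lifts_coact (N + M) (x + y)"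
proof -
  have "pr2 (Cop (lift (N + M) (x + y))) = pr2 (Cop (lift N x) * Cop (lift M y))"
    using x y by (simp add: lift_add Cop_add Amon_finsupp)
  also have "\<dots> = pr2 (pr2 (Cop (lift N x)) * pr2 (Cop (lift M y)))" by (rule pr2_mult)
  also have "\<dots> = pr2 (Lmap (lift_right N) (pr2 (Cop x)) * Lmap (lift_right M) (pr2 (Cop y)))"
    using x(3) y(3) by (simp add: lifts_coact_def)
  also have "\<dots> = pr2 (Lmap (lift_right (N + M)) (pr2 (Cop x) * pr2 (Cop y)))"
    using Lmap_lift_right_mult[OF keys_coact_weight[OF x(1)] keys_coact_weight[OF y(1)] x(2) y(2)]
    by simp
  also have "\<dots> = Lmap (lift_right (N + M)) (pr2 (pr2 (Cop x) * pr2 (Cop y)))"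
    by (rule pr2_Lmap) simp
  also have "pr2 (pr2 (Cop x) * pr2 (Cop y)) = pr2 (Cop (x + y))"
    using x y by (simp add: Cop_add Amon_finsupp pr2_mult[symmetric])
  finally show ?thesis unfolding lifts_coact_def .
qed

text \<open>Base case: lift (8p) 1 = xibar_1^(8p).  Its coproduct is (1 \<otimes> xibar_1^8 + xibar_1^8 \<otimes> 1)^p, and
  xibar_1^8 vanishes in A(2)_*.\<close>

lemma lifts_coact_unit: "lifts_coact (8 * p) 0"
proof (induction p)
  case 0
  show ?case unfolding lifts_coact_def mult_0_right lift_zero mon3_zero
    by (simp add: one_T pr2_T lift_right_def)
next
  case (Suc p)
  have "Cop (mon3 8 0 0) = T 0 (mon3 8 0 0) + T (mon3 8 0 0) 0" by (simp add: Cop_mon3 Del1_8)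
  then have "lifts_coact 8 0"
    unfolding lifts_coact_def lift_zero by (simp add: pr2_add pr2_T one_T lift_right_def)
  moreover have w: "2 * weight (0::mon) \<le> 8" "2 * weight (0::mon) \<le> 8 * p" by simp_all
  ultimately have "lifts_coact (8 + 8 * p) (0 + 0)"
    using lifts_coact_add[OF zero_Amon w(1) _ zero_Amon w(2) Suc] by blast
  then show ?case by (simp only: add_0_right mult_Suc_right)
qed

text \<open>Compatibility on the algebra generators of (A//A(1))_*: xibar_1^4, xibar_2^2 and xibar_k
  for k \<ge> 3, each lifted with N = 2 wt.  For these lift N g = shift g.\<close>

lemma pr2_Del: "m \<ge> 3 \<Longrightarrow> pr2 (Del m) = (\<Sum>i\<le>3. T (xi i) (smul (2 ^ i) (xi (m - i))))"
proof -
  assume m: "m \<ge> 3"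
  have "pr2 (Del m) = (\<Sum>i\<le>m. if i \<le> 3 then T (xi i) (smul (2 ^ i) (xi (m - i))) else 0)"
    by (simp add: Del_sum pr2_sum pr2_T)
  also have "\<dots> = (\<Sum>i\<in>{i \<in> {..m}. i \<le> 3}. T (xi i) (smul (2 ^ i) (xi (m - i))))"
    by (subst sum.inter_filter) auto
  also have "{i \<in> {..m}. i \<le> 3} = {..3}" using m by auto
  finally show ?thesis .
qed

lemma lift_key:
  assumes "i \<le> 3" "3 \<le> k"
  shows "lift (2 ^ k) (smul (2 ^ i) (xi (k - i))) = smul (2 ^ i) (xi (Suc k - i))"
proof (cases "i < k")
  case True
  have w: "weight (smul (2 ^ i) (xi (k - i))) = 2 ^ (k - 1)"
    using weight_Del_key[of i k] True assms by simp
  have "2 * 2 ^ (k - 1) = (2::nat) ^ k" using assms by (cases k) auto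
  then have z: "2 ^ k - 2 * weight (smul (2 ^ i) (xi (k - i))) = 0" using w by simp
  have "shift (smul (2 ^ i) (xi (k - i))) = smul (2 ^ i) (xi (Suc (k - i)))"
    using True by (intro shift_smul_xi) simp
  moreover have "Suc (k - i) = Suc k - i" using True by simp
  ultimately show ?thesis using z by (simp add: lift_def)
next
  case False
  then have "i = 3" "k = 3" using assms by auto
  then show ?thesis by (simp add: lift_def xi_simps)
qed

lemma lifts_coact_xi: "k \<ge> 3 \<Longrightarrow> lifts_coact (2 ^ k) (xi k)"
proof -
  assume k: "k \<ge> 3"
  have "lift (2 ^ k) (xi k) = xi (Suc k)" using lift_key[of 0 k] k by simp
  then have "pr2 (Cop (lift (2 ^ k) (xi k))) = (\<Sum>i\<le>3. T (xi i) (smul (2 ^ i) (xi (Suc k - i))))"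
    using k by (simp add: Cop_xi pr2_Del)
  also have "\<dots> = (\<Sum>i\<le>3. Lmap (lift_right (2 ^ k)) (T (xi i) (smul (2 ^ i) (xi (k - i)))))"
    by (rule sum.cong) (use k lift_key in \<open>auto simp: lift_right_def\<close>)
  also have "\<dots> = Lmap (lift_right (2 ^ k)) (pr2 (Cop (xi k)))"
    using k by (simp add: Cop_xi pr2_Del Lmap_sum)
  finally show ?thesis by (simp add: lifts_coact_def)
qed

definition generator :: "mon \<Rightarrow> bool" where
  "generator g \<longleftrightarrow> g = mon3 4 0 0 \<or> g = mon3 0 2 0 \<or> (\<exists>k\<ge>3. g = xi k)"

lemma generator_props:
  assumes "generator g"
  shows "g \<in> AA1mon" "0 < weight g" "8 dvd 2 * weight g" "lifts_coact (2 * weight g) g"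
proof -
  have "g \<in> AA1mon \<and> 0 < weight g \<and> 8 dvd 2 * weight g \<and> lifts_coact (2 * weight g) g"
    using assms unfolding generator_def
  proof (elim disjE exE conjE)
    assume "g = mon3 4 0 0" then show ?thesis
      by (simp add: lifts_coact_def lift_def shift_mon3_0 Cop_mon3 Del1_4 Del2_4 pr2_add pr2_T
          Lmap_add lift_right_def ac_simps)
  next
    assume "g = mon3 0 2 0" then show ?thesis
      by (simp add: lifts_coact_def lift_def shift_mon3_0 Cop_mon3 Del2_2 Del3_2 pr2_add pr2_T
          Lmap_add lift_right_def ac_simps)
  next
    fix k assume k: "3 \<le> k" and g: "g = xi k"
    have w: "weight (xi k) = 2 ^ (k - 1)" using weight_smul_xi[of 1 k] k by simp
    have p: "2 * 2 ^ (k - 1) = (2::nat) ^ k" using k by (cases k) auto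
    have "(8::nat) dvd 2 ^ k" using dvd_pow2[of 3 k] k by simp
    moreover have "xi k \<in> AA1mon" using smul_xi_AA1[of 1 k] k by simp
    ultimately show ?thesis using g w p lifts_coact_xi[OF k] by simp
  qed
  then show "g \<in> AA1mon" "0 < weight g" "8 dvd 2 * weight g" "lifts_coact (2 * weight g) g"
    by auto
qed

lemma Amon_upd: "x \<in> Amon \<Longrightarrow> k \<noteq> 0 \<Longrightarrow> x(k := v) \<in> Amon"
proof -
  assume a: "x \<in> Amon" "k \<noteq> 0"
  have "{n. (x(k := v)) n \<noteq> 0} \<subseteq> insert k {n. x n \<noteq> 0}" by auto
  moreover have "finite (insert k {n. x n \<noteq> 0})" using a by (simp add: Amon_def)
  ultimately have "finite {n. (x(k := v)) n \<noteq> 0}" by (rule finite_subset)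
  then show ?thesis using a by (simp add: Amon_def)
qed

lemma AA1_decomp:
  assumes x: "x \<in> AA1mon" "x \<noteq> 0"
  shows "\<exists>x' g. x = x' + g \<and> x' \<in> AA1mon \<and> generator g"
proof -
  obtain k where k: "x k \<noteq> 0" using x by (auto simp: fun_eq_iff)
  have xA: "x \<in> Amon" using x by (simp add: AA1mon_def)
  have "k \<noteq> 0"
  proof
    assume "k = 0" then show False using k xA by (simp add: Amon_def)
  qed
  then have "k = 1 \<or> k = 2 \<or> k \<ge> 3" by auto
  then show ?thesis
  proof (elim disjE)
    assume k1: "k = 1"
    have d: "4 dvd x 1" using x by (simp add: AA1mon_def)
    then have ge: "x 1 \<ge> 4" using k k1 by (auto elim!: dvdE)
    let ?x' = "x(1 := x 1 - 4)"
    have "x = ?x' + mon3 4 0 0" using ge by (auto simp: fun_eq_iff mon3_def)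
    moreover have "?x' \<in> AA1mon" using x d Amon_upd[OF xA, of 1] by (auto simp: AA1mon_def dvd_diff_nat)
    ultimately show ?thesis by (auto simp: generator_def)
  next
    assume k2: "k = 2"
    have d: "2 dvd x 2" using x by (simp add: AA1mon_def)
    then have ge: "x 2 \<ge> 2" using k k2 by (auto elim!: dvdE)
    let ?x' = "x(2 := x 2 - 2)"
    have "x = ?x' + mon3 0 2 0" using ge by (auto simp: fun_eq_iff mon3_def)
    moreover have "?x' \<in> AA1mon" using x d Amon_upd[OF xA, of 2] by (auto simp: AA1mon_def dvd_diff_nat)
    ultimately show ?thesis by (auto simp: generator_def)
  next
    assume k3: "k \<ge> 3"
    let ?x' = "x(k := x k - 1)"
    have "x = ?x' + xi k" using k k3 by (auto simp: fun_eq_iff xi_apply)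
    moreover have "?x' \<in> AA1mon" using x k3 Amon_upd[OF xA, of k] by (auto simp: AA1mon_def)
    ultimately show ?thesis using k3 by (auto simp: generator_def)
  qed
qed

theorem coact_lift:
  assumes "x \<in> AA1mon" "8 dvd N" "2 * weight x \<le> N"
  shows "lifts_coact N x"
  using assms
proof (induction "weight x" arbitrary: x N rule: less_induct)
  case less
  show ?case
  proof (cases "x = 0")
    case True
    then show ?thesis using lifts_coact_unit less.prems(2) by (auto elim!: dvdE)
  next
    case False
    obtain x' g where d: "x = x' + g" "x' \<in> AA1mon" "generator g"
      using AA1_decomp[OF less.prems(1) False] by blast
    note G = generator_props[OF d(3)]
    have wx: "weight x = weight x' + weight g"
      using d(1,2) G(1) by (simp add: weight_add Amon_finsupp AA1_Amon)
    define N' where "N' = N - 2 * weight g"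
    have N': "N = N' + 2 * weight g" "2 * weight x' \<le> N'" "8 dvd N'"
      using less.prems(2,3) wx G(3) by (auto simp: N'_def dvd_diff_nat)
    have "lifts_coact N' x'" by (rule less.hyps) (use wx G(2) d(2) N' in auto)
    from lifts_coact_add[OF AA1_Amon[OF d(2)] N'(2) this AA1_Amon[OF G(1)] _ G(4)]
    show ?thesis using d(1) N'(1) by simp
  qed
qed


definition unshift :: "mon \<Rightarrow> mon" where "unshift m = (\<lambda>k. if k = 0 then 0 else m (Suc k))"

lemma unshift_lift: "x \<in> Amon \<Longrightarrow> unshift (lift N x) = x"
  by (auto simp: unshift_def fun_eq_iff lift_apply Amon_def)

lemma unshift_Amon: "m \<in> Amon \<Longrightarrow> unshift m \<in> Amon"
proof -
  assume a: "m \<in> Amon"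
  have "{k. unshift m k \<noteq> 0} \<subseteq> (\<lambda>k. k - 1) ` {k. m k \<noteq> 0}"
  proof
    fix k assume "k \<in> {k. unshift m k \<noteq> 0}"
    then have "m (Suc k) \<noteq> 0" by (auto simp: unshift_def split: if_splits)
    then show "k \<in> (\<lambda>k. k - 1) ` {k. m k \<noteq> 0}" by (metis (mono_tags) diff_Suc_1 image_eqI mem_Collect_eq)
  qed
  moreover have "finite ((\<lambda>k. k - 1) ` {k. m k \<noteq> 0})" using a by (simp add: Amon_def)
  ultimately have "finite {k. unshift m k \<noteq> 0}" by (rule finite_subset)
  then show ?thesis by (simp add: Amon_def unshift_def)
qed

lemma unshift_decomp: "m \<in> Amon \<Longrightarrow> m = mon3 (m 1) 0 0 + shift (unshift m)"
proof (rule ext)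
  fix k assume "m \<in> Amon"
  then have m0: "m 0 = 0" by (simp add: Amon_def)
  show "m k = (mon3 (m 1) 0 0 + shift (unshift m)) k"
    by (cases "k = 0"; cases "k = 1") (auto simp: unshift_def shift_def mon3_def m0)
qed

lemma weight_unshift: "m \<in> Amon \<Longrightarrow> weight m = m 1 + 2 * weight (unshift m)"
proof -
  assume a: "m \<in> Amon"
  have "weight m = weight (mon3 (m 1) 0 0 + shift (unshift m))" using unshift_decomp[OF a] by simp
  also have "\<dots> = m 1 + 2 * weight (unshift m)"
    using unshift_Amon[OF a] by (simp add: weight_add Amon_finsupp weight_shift)
  finally show ?thesis .
qed

lemma lift_unshift: "m \<in> Amon \<Longrightarrow> weight m = N \<Longrightarrow> lift N (unshift m) = m"
proof -
  assume a: "m \<in> Amon" "weight m = N"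
  have "N - 2 * weight (unshift m) = m 1" using weight_unshift[OF a(1)] a(2) by simp
  then show ?thesis using unshift_decomp[OF a(1)] by (simp add: lift_def)
qed

lemma unshift_AA1: "m \<in> AA2mon \<Longrightarrow> unshift m \<in> AA1mon"
  using unshift_Amon[of m] by (auto simp: AA2mon_def AA1mon_def unshift_def elim: dvd_trans[rotated])

lemma lift_inj: "inj_on (lift N) Amon"
  by (rule inj_onI) (metis unshift_lift)

text \<open>lift (8j) maps the basis of N_1(j) onto the basis monomials of N_1(2j) lying in F^j, which
  are exactly those of M_2(j).\<close>

lemma lift_image_N1: "lift (8 * j) ` N1 j = N1 (2 * j) \<inter> Fbasis j"
proof
  show "lift (8 * j) ` N1 j \<subseteq> N1 (2 * j) \<inter> Fbasis j"
  proof
    fix y assume "y \<in> lift (8 * j) ` N1 j"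
    then obtain x where x: "x \<in> N1 j" "y = lift (8 * j) x" by blast
    have xA: "x \<in> AA1mon" "weight x \<le> 4 * j" using x by (auto simp: N1_iff)
    have yA: "y \<in> AA2mon" using lift_AA2[OF xA(1)] xA x by simp
    have wy: "weight y = 8 * j" using weight_lift[OF AA1_Amon[OF xA(1)]] xA x by simp
    show "y \<in> N1 (2 * j) \<inter> Fbasis j"
      using yA wy AA2_AA1 tau1_AA2_id[OF yA] by (simp add: N1_iff Fbasis_iff)
  qed
next
  show "N1 (2 * j) \<inter> Fbasis j \<subseteq> lift (8 * j) ` N1 j"
  proof
    fix y assume y: "y \<in> N1 (2 * j) \<inter> Fbasis j"
    then have yA: "y \<in> AA1mon" "weight y \<le> 8 * j" "8 * j \<le> weight (tau1 y)"
      by (auto simp: N1_iff Fbasis_iff)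
    have yAm: "y \<in> Amon" using yA by (simp add: AA1mon_def)
    have "weight (tau2 y) = 0" using weight_tau[OF yAm] yA by simp
    then have "tau2 y = 0" using weight_eq_0[of "tau2 y"] by (simp add: tau2_mon3)
    then have yy: "tau1 y = y" using tau_split[of y] by simp
    then have y2: "y \<in> AA2mon" using tau1_AA2[OF yAm] by simp
    have wy: "weight y = 8 * j" using yA yy by simp
    have "y = lift (8 * j) (unshift y)" using lift_unshift[OF yAm wy] by simp
    moreover have "unshift y \<in> N1 j"
      using unshift_AA1[OF y2] weight_unshift[OF yAm] wy by (simp add: N1_iff)
    ultimately show "y \<in> lift (8 * j) ` N1 j" by blast
  qed
qed

text \<open>top_mon = xibar_1^4 xibar_2^2 xibar_3 spans the top degree 17 of (A(2)//A(1))_*.  A monomial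
  c of (A//A(1))_* is of top type w if c = m * top_mon with m in (A//A(2))_* of weight w.  For
  j \<ge> 1 these are exactly the basis monomials of Q^(j-1) of weight above 8j; the connecting map
  of the exact sequence sends m * top_mon to lift^(-1) m and kills all other monomials.\<close>

lemma Cop_top: "Cop top_mon = (T 0 (mon3 4 0 0) + T (mon3 4 0 0) 0) *
   (T 0 (mon3 0 2 0) + T (mon3 2 0 0) (mon3 4 0 0) + T (mon3 0 2 0) 0) *
   (T 0 (mon3 0 0 1) + T (mon3 1 0 0) (mon3 0 2 0) + T (mon3 0 1 0) (mon3 4 0 0) + T (mon3 0 0 1) 0)"
  by (simp add: top_mon_def Cop_mon3 Del1_4 Del2_2 Del3_1)

lemma lkp_Cop_top: "lkp (Cop top_mon) (a, top_mon) = (if a = 0 then 1 else 0)"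
  unfolding Cop_top by (simp add: algebra_simps T_mult lookup_add lookup_single top_mon_def when_def)

lemma top_not_in_rest: "(a, top_mon) \<notin> kys (Cop top_mon + T 0 top_mon)"
  by (simp add: in_keys_iff lookup_add lkp_Cop_top lookup_single when_def)

definition top_type :: "nat \<Rightarrow> mon \<Rightarrow> bool" where
  "top_type w c \<longleftrightarrow> c \<in> AA1mon \<and> tau2 c = top_mon \<and> weight (tau1 c) = w"

lemma tau2_big: "c \<in> AA1mon \<Longrightarrow> 8 < weight (tau2 c) \<Longrightarrow> tau2 c = top_mon"
  using mod8_cases[of "c 1"] mod4_cases[of "c 2"] mod2_cases[of "c 3"]
  by (auto simp: tau2_mon3 AA1mon_def top_mon_def)

text \<open>Since weight (tau2 c) \<le> 12, a monomial outside F^j of weight above 8j must have tau2 part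
  top_mon and tau1 part of weight 8(j-1).\<close>

lemma top_type_iff:
  assumes j: "j \<ge> 1" and c: "c \<in> AA1mon"
  shows "(c \<notin> Fbasis j \<and> 8 * j < weight c) \<longleftrightarrow> top_type (8 * (j - 1)) c"
proof -
  have cA: "c \<in> Amon" using c by (simp add: AA1mon_def)
  have wc: "weight c = weight (tau1 c) + weight (tau2 c)" by (rule weight_tau[OF cA])
  obtain p where p: "weight (tau1 c) = 8 * p" using weight_AA2_dvd[OF tau1_AA2[OF cA]] by (auto elim!: dvdE)
  have t2: "weight (tau2 c) \<le> 12" using weight_tau2_le[OF c] .
  show ?thesis
  proof
    assume h: "c \<notin> Fbasis j \<and> 8 * j < weight c"
    then have "8 * p < 8 * j" using c p by (simp add: Fbasis_iff)
    moreover have "8 * j < 8 * p + weight (tau2 c)" using h wc p by simp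
    ultimately have pj: "p = j - 1" "8 < weight (tau2 c)" using t2 by auto
    then show "top_type (8 * (j - 1)) c" using c p tau2_big[OF c] by (simp add: top_type_def)
  next
    assume "top_type (8 * (j - 1)) c"
    then have "weight (tau1 c) = 8 * (j - 1)" "tau2 c = top_mon" by (auto simp: top_type_def)
    then show "c \<notin> Fbasis j \<and> 8 * j < weight c" using wc j c by (auto simp: Fbasis_iff)
  qed
qed

lemma top_type_facts:
  assumes "top_type w c"
  shows "tau1 c \<in> AA2mon" "weight (tau1 c) = w" "c = tau1 c + top_mon" "weight c = w + 12"
    "unshift (tau1 c) \<in> AA1mon" "2 * weight (unshift (tau1 c)) \<le> w" "lift w (unshift (tau1 c)) = tau1 c"
proof -
  have c: "c \<in> AA1mon" "tau2 c = top_mon" "weight (tau1 c) = w" using assms by (auto simp: top_type_def)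
  show t: "tau1 c \<in> AA2mon" using tau1_AA2 AA1_Amon c by blast
  show "weight (tau1 c) = w" by (rule c(3))
  show "c = tau1 c + top_mon" using tau_split[of c] c by simp
  show "weight c = w + 12" using weight_tau[OF AA1_Amon[OF c(1)]] c by simp
  show "unshift (tau1 c) \<in> AA1mon" using unshift_AA1[OF t] .
  show "2 * weight (unshift (tau1 c)) \<le> w" using weight_unshift[OF AA2_Amon[OF t]] c by simp
  show "lift w (unshift (tau1 c)) = tau1 c" using lift_unshift[OF AA2_Amon[OF t]] c by simp
qed

lemma mult_T0: "u * T 0 t = Lmap (\<lambda>k. (fst k, snd k + t)) u"
proof -
  have "u * T 0 t = (\<Sum>k\<in>kys u. sng k 1) * T 0 t" by (simp flip: pm_as_sum)
  also have "\<dots> = (\<Sum>k\<in>kys u. sng (fst k, snd k + t) 1)"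
    by (simp add: sum_distrib_right mult_single plus_prod_def)
  also have "\<dots> = Lmap (\<lambda>k. (fst k, snd k + t)) u" by (simp add: Lmap_eq)
  finally show ?thesis .
qed

lemma keys_sum_sub: "kys (sum (f :: 'i \<Rightarrow> 'a \<Rightarrow>\<^sub>0 bit) I) \<subseteq> (\<Union>i\<in>I. kys (f i))"
proof (induction I rule: infinite_finite_induct)
  case (insert x F)
  then show ?case using keys_add[of "f x" "sum f F"] by auto
qed auto

lemma keys_Lmap: "kys (Lmap \<phi> u) \<subseteq> \<phi> ` kys u"
  using keys_sum_sub[of "\<lambda>k. sng (\<phi> k) 1" "kys u"] by (auto simp: Lmap_eq)

text \<open>Write Cop top_mon = 1 \<otimes> top_mon + V.  The terms of the coaction on m * top_mon coming from
  1 \<otimes> top_mon all have right factor of top type (weight m) \<dots>\<close>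

lemma coact_times_top_keys:
  assumes m: "m \<in> AA2mon" and q: "q \<in> kys (Lmap (\<lambda>k. (fst k, snd k + top_mon)) (pr2 (Cop m)))"
  shows "top_type (weight m) (snd q)"
proof -
  obtain k where k: "k \<in> kys (pr2 (Cop m))" "q = (fst k, snd k + top_mon)"
    using subsetD[OF keys_Lmap q] by blast
  then have "fst k \<in> A2mon" "k \<in> kys (Cop m)" by (auto simp: keys_pr2)
  then have s: "snd k \<in> AA2mon" "weight (snd k) = weight m"
    using keys_cop_AA2[OF m] by (auto simp: allkeys_def AA2_key_def)
  have "tau1 (snd k + top_mon) = snd k" using tau1_add_AA2[OF s(1), of top_mon] by simp
  moreover have "tau2 (snd k + top_mon) = top_mon" using tau2_add_AA2[OF s(1), of top_mon] by simp
  moreover have "snd k + top_mon \<in> AA1mon" using s(1) AA2_AA1 by auto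
  ultimately show ?thesis using k s by (simp add: top_type_def)
qed

text \<open>\<dots> while those coming from V never do: top type would force the V-factor to be 1 \<otimes> top_mon.\<close>

lemma coact_rest_keys:
  assumes m: "m \<in> AA2mon" and q: "q \<in> kys (pr2 (Cop m * (Cop top_mon + T 0 top_mon)))"
  shows "\<not> top_type (weight m) (snd q)"
proof
  assume "top_type (weight m) (snd q)"
  then have h: "tau2 (snd q) = top_mon" "weight (tau1 (snd q)) = weight m" by (auto simp: top_type_def)
  obtain k l where kl: "q = k + l" "k \<in> kys (Cop m)" "l \<in> kys (Cop top_mon + T 0 top_mon)"
      "fst k \<in> A2mon" "fst l \<in> A2mon"
    by (rule keys_pr2_prod[OF q])
  have s: "snd k \<in> AA2mon" "weight (snd k) = weight m"
    using keys_cop_AA2[OF m] kl by (auto simp: allkeys_def AA2_key_def)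
  have "l \<in> kys (Cop top_mon) \<or> l = (0, top_mon)"
    using kl(3) keys_add[of "Cop top_mon" "T 0 top_mon"] by auto
  then have lA: "snd l \<in> AA1mon" using keys_cop_AA1[OF top_AA1] by (auto simp: allkeys_def AA1_key_def)
  have sq: "snd q = snd k + snd l" using kl(1) by simp
  have "tau2 (snd l) = top_mon" using h(1) sq tau2_add_AA2[OF s(1)] by simp
  moreover have "tau1 (snd q) = snd k + tau1 (snd l)" using sq tau1_add_AA2[OF s(1)] by simp
  then have "weight (tau1 (snd q)) = weight (snd k) + weight (tau1 (snd l))"
    using s(1) lA by (simp add: weight_add Amon_finsupp AA2_Amon tau1_AA2 AA1_Amon)
  then have "weight (tau1 (snd l)) = 0" using h(2) s(2) by simp
  then have "tau1 (snd l) = 0" using weight_eq_0 tau1_AA2 AA2_Amon AA1_Amon lA by blast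
  ultimately have "snd l = top_mon" using tau_split[of "snd l"] by simp
  then show False using top_not_in_rest[of "fst l"] kl(3) by (cases l) auto
qed

lemma coact_top_part:
  assumes m: "m \<in> AA2mon"
  shows "Filt (\<lambda>k. top_type (weight m) (snd k)) (pr2 (Cop (m + top_mon)))
         = Lmap (\<lambda>k. (fst k, snd k + top_mon)) (pr2 (Cop m))"
proof -
  let ?V = "Cop top_mon + T 0 top_mon"
  let ?S = "\<lambda>k. top_type (weight m) (snd k)"
  let ?times_top = "\<lambda>k::mon \<times> mon. (fst k, snd k + top_mon)"
  have V: "T 0 top_mon + ?V = Cop top_mon" by (simp add: ac_simps)
  have "Cop (m + top_mon) = Cop m * Cop top_mon"
    using m by (simp add: Cop_add Amon_finsupp AA2_Amon)
  also have "\<dots> = Cop m * (T 0 top_mon + ?V)" by (simp only: V)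
  also have "\<dots> = Cop m * T 0 top_mon + Cop m * ?V" by (rule distrib_left)
  finally have "pr2 (Cop (m + top_mon)) = pr2 (Cop m * T 0 top_mon) + pr2 (Cop m * ?V)"
    by (simp only: pr2_add)
  moreover have "pr2 (Cop m * T 0 top_mon) = Lmap ?times_top (pr2 (Cop m))"
  proof -
    have "pr2 (Cop m * T 0 top_mon) = pr2 (pr2 (Cop m) * T 0 top_mon)" by (rule pr2_mult1)
    also have "\<dots> = pr2 (Lmap ?times_top (pr2 (Cop m)))" by (simp only: mult_T0)
    also have "\<dots> = Lmap ?times_top (pr2 (Cop m))" by (subst pr2_Lmap) auto
    finally show ?thesis .
  qed
  moreover have "Filt ?S (Lmap ?times_top (pr2 (Cop m))) = Lmap ?times_top (pr2 (Cop m))"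
    using coact_times_top_keys[OF m] by (intro Filt_id_if)
  moreover have "Filt ?S (pr2 (Cop m * ?V)) = 0"
    using coact_rest_keys[OF m] by (intro Filt_zero_if)
  ultimately show ?thesis by (simp add: Filt_add)
qed

text \<open>Combining with the compatibility of lift: forgetting top_mon and applying lift^(-1) to the
  top-type part of the coaction on c = lift w z * top_mon gives back the coaction on z.\<close>

lemma coact_top_type:
  assumes c: "top_type w c"
  shows "Lmap (\<lambda>k. (fst k, unshift (tau1 (snd k)))) (Filt (\<lambda>k. top_type w (snd k)) (pr2 (Cop c)))
         = pr2 (Cop (unshift (tau1 c)))"
proof -
  note F = top_type_facts[OF c]
  define m where "m = tau1 c"
  define z where "z = unshift m"
  have mA: "m \<in> AA2mon" using F(1) by (simp add: m_def)
  have zA: "z \<in> AA1mon" using F(5) by (simp add: z_def m_def)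
  have "Filt (\<lambda>k. top_type w (snd k)) (pr2 (Cop c)) = Lmap (\<lambda>k. (fst k, snd k + top_mon)) (pr2 (Cop m))"
    using coact_top_part[OF mA] F(2,3) by (simp add: m_def)
  moreover have "pr2 (Cop m) = Lmap (lift_right w) (pr2 (Cop z))"
    using coact_lift[OF zA _ F(6)[folded m_def z_def]] weight_AA2_dvd[OF mA] F(2,7)
    by (simp add: lifts_coact_def m_def z_def)
  ultimately have "Lmap (\<lambda>k. (fst k, unshift (tau1 (snd k)))) (Filt (\<lambda>k. top_type w (snd k)) (pr2 (Cop c)))
      = Lmap (\<lambda>k. (fst k, unshift (tau1 (snd k))))
          (Lmap (\<lambda>k. (fst k, snd k + top_mon)) (Lmap (lift_right w) (pr2 (Cop z))))"
    by simp
  also have "\<dots> = pr2 (Cop z)"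
    unfolding Lmap_Lmap
  proof (rule Lmap_id)
    fix k assume k: "k \<in> kys (pr2 (Cop z))"
    have "snd k \<in> AA1mon" using k keys_cop_AA1[OF zA] by (auto simp: allkeys_def AA1_key_def keys_pr2)
    moreover have "weight (snd k) \<le> weight z"
      using k keys_coact_weight[OF AA1_Amon[OF zA]] by (auto simp: allkeys_def wt_key_def)
    moreover have "2 * weight z \<le> w" using F(6) by (simp add: z_def m_def)
    ultimately have k: "snd k \<in> AA1mon" "2 * weight (snd k) \<le> w" by auto
    have "lift w (snd k) \<in> AA2mon" using lift_AA2[OF k(1) _ k(2)] weight_AA2_dvd[OF mA] F(2)
      by (simp add: m_def)
    then show "((\<lambda>k. (fst k, unshift (tau1 (snd k)))) \<circ> ((\<lambda>k. (fst k, snd k + top_mon)) \<circ> lift_right w)) k = k"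
      using k by (simp add: lift_right_def tau1_add_AA2 unshift_lift AA1_Amon)
  qed
  finally show ?thesis by (simp add: z_def m_def)
qed

lemma degree_top_type:
  assumes c: "top_type w c"
  shows "degree c = w + degree (unshift (tau1 c)) + 17"
proof -
  note F = top_type_facts[OF c]
  have "degree c = degree (tau1 c) + degree top_mon"
    using degree_tau[OF AA1_Amon[OF conjunct1[OF c[unfolded top_type_def]]]] c
    by (simp add: top_type_def)
  also have "degree (tau1 c) = w + degree (unshift (tau1 c))"
    using degree_lift[OF AA1_Amon[OF F(5)] F(6)] F(7) by simp
  finally show ?thesis by simp
qed

lemma coact_below_top_type:
  assumes "c \<in> Amon" "weight c < w + 12"
  shows "Filt (\<lambda>k. top_type w (snd k)) (pr2 (Cop c)) = 0"
proof (rule Filt_zero_if)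
  fix k assume "k \<in> kys (pr2 (Cop c))"
  then have "weight (snd k) \<le> weight c"
    using keys_coact_weight[OF assms(1)] by (auto simp: allkeys_def wt_key_def)
  then show "\<not> top_type w (snd k)" using top_type_facts(4) assms(2) by fastforce
qed


text \<open>The morphism condition of is_comod_mor is an equation between finite sets read as vectors
  over F_2; it is checked after translating both sides into the tensor algebra R.\<close>


lemma Lin_if_single: "Lin (\<lambda>k. if P k then {\<phi> k} else {}) u = Lmap \<phi> (Filt P u)"
proof -
  have "Lin (\<lambda>k. if P k then {\<phi> k} else {}) u = (\<Sum>k\<in>kys u. if P k then sng (\<phi> k) 1 else 0)"
    unfolding Lin_def by (rule sum.cong) auto
  also have "\<dots> = (\<Sum>k\<in>{k \<in> kys u. P k}. sng (\<phi> k) 1)"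
    by (subst sum.inter_filter) auto
  also have "\<dots> = Lmap \<phi> (Filt P u)" by (simp add: Lmap_eq)
  finally show ?thesis .
qed

lemma Filt_Filt2: "Filt P (Filt Q u) = Filt (\<lambda>k. P k \<and> Q k) u"
  by (simp add: Filt_ind) (rule arg_cong[of _ _ ind], auto)

lemma Filt_cong: "(\<And>k. k \<in> kys u \<Longrightarrow> P k = Q k) \<Longrightarrow> Filt P u = Filt Q u"
  by (simp add: Filt_ind) (metis (mono_tags, lifting))

lemma lsum_single_inj: "inj_on \<phi> {x \<in> X. P x} \<Longrightarrow> lsum (\<lambda>x. if P x then {\<phi> x} else {}) X = \<phi> ` {x \<in> X. P x}"
proof -
  assume inj: "inj_on \<phi> {x \<in> X. P x}"
  have "\<And>y. {x \<in> X. y \<in> (if P x then {\<phi> x} else {})} = {x \<in> X. P x \<and> \<phi> x = y}" by auto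
  moreover have "\<And>y. card {x \<in> X. P x \<and> \<phi> x = y} = (if y \<in> \<phi> ` {x \<in> X. P x} then 1 else 0)"
  proof -
    fix y
    show "card {x \<in> X. P x \<and> \<phi> x = y} = (if y \<in> \<phi> ` {x \<in> X. P x} then 1 else 0)"
    proof (cases "y \<in> \<phi> ` {x \<in> X. P x}")
      case True
      then obtain x0 where x0: "x0 \<in> X" "P x0" "\<phi> x0 = y" by blast
      then have "{x \<in> X. P x \<and> \<phi> x = y} = {x0}" using inj by (auto dest: inj_onD)
      then show ?thesis using True by simp
    next
      case False
      then have "{x \<in> X. P x \<and> \<phi> x = y} = {}" by auto
      then have "card {x \<in> X. P x \<and> \<phi> x = y} = 0" by (simp only: card.empty)
      with False show ?thesis by simp
    qed
  qed
  ultimately show ?thesis by (auto simp: lsum_def)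
qed

lemma mor_cond:
  fixes f :: "'b \<Rightarrow> 'c set" and S :: "('a \<times> 'b) set"
  assumes "finite S" "\<And>c. finite (f c)" "finite B" "\<And>d. d \<in> B \<Longrightarrow> finite (g d)"
    and "Lin (\<lambda>(a, c). {(a, d) | d. d \<in> f c}) (ind S) = (\<Sum>d\<in>B. ind (g d))"
  shows "lsum (\<lambda>(a, c). {(a, d) | d. d \<in> f c}) S = lsum g B"
proof -
  have fF: "\<And>x :: 'a \<times> 'b. finite ((\<lambda>(a, c). {(a, d) | d. d \<in> f c}) x)"
  proof -
    fix x :: "'a \<times> 'b"
    obtain a c where x: "x = (a, c)" by (cases x)
    have "{(a, d) | d. d \<in> f c} = Pair a ` f c" by auto
    then show "finite ((\<lambda>(a, c). {(a, d) | d. d \<in> f c}) x)" using assms(2) x by simp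
  qed
  show ?thesis
  proof (rule ind_inj)
    show "finite (lsum (\<lambda>(a, c). {(a, d) | d. d \<in> f c}) S)" using assms(1) fF by (intro finite_lsum) auto
    show "finite (lsum g B)" using assms(3,4) by (intro finite_lsum) auto
    show "ind (lsum (\<lambda>(a, c). {(a, d) | d. d \<in> f c}) S) = ind (lsum g B)"
      using assms by (simp add: ind_lsum fF Lin_ind)
  qed
qed

lemma is_comod_morI:
  assumes fin_f: "\<And>c. finite (f c)"
    and basis: "\<And>b. b \<in> cbasis V \<Longrightarrow> f b \<subseteq> cbasis W"
    and deg: "\<And>b c. b \<in> cbasis V \<Longrightarrow> c \<in> f b \<Longrightarrow> cdeg W c = cdeg V b"
    and fin_V: "\<And>b. b \<in> cbasis V \<Longrightarrow> finite (ccoact V b)"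
    and fin_W: "\<And>d. d \<in> cbasis W \<Longrightarrow> finite (ccoact W d)"
    and coact: "\<And>b. b \<in> cbasis V \<Longrightarrow>
      Lin (\<lambda>(a, c). {(a, d) | d. d \<in> f c}) (ind (ccoact V b)) = (\<Sum>d\<in>f b. ind (ccoact W d))"
  shows "is_comod_mor V W f"
  unfolding is_comod_mor_def
proof (intro ballI conjI)
  fix b assume b: "b \<in> cbasis V"
  show "finite (f b)" "f b \<subseteq> cbasis W" "\<And>c. c \<in> f b \<Longrightarrow> cdeg W c = cdeg V b"
    using fin_f basis[OF b] deg[OF b] by auto
  show "lsum (\<lambda>(a, c). {(a, d) | d. d \<in> f c}) (ccoact V b) = lsum (ccoact W) (f b)"
    using fin_V[OF b] fin_f fin_W basis[OF b] coact[OF b] by (intro mor_cond) auto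
qed

lemma ind_coact2: "e \<in> Amon \<Longrightarrow> ind (coact2 e) = pr2 (Cop e)"
  using coact2_Cop by blast

lemma finite_coact2: "e \<in> Amon \<Longrightarrow> finite (coact2 e)"
  using coact2_Cop by blast

lemma coact2_keys: "e \<in> Amon \<Longrightarrow> coact2 e = kys (pr2 (Cop e))"
  by (metis coact2_Cop keys_ind)

lemma Qcoact: "e \<in> Amon \<Longrightarrow> finite (ccoact (Qcomod i) e) \<and>
   ind (ccoact (Qcomod i) e) = Filt (\<lambda>k. snd k \<notin> Fbasis (i + 1)) (pr2 (Cop e))"
proof -
  assume e: "e \<in> Amon"
  have "ccoact (Qcomod i) e = {k \<in> kys (pr2 (Cop e)). snd k \<notin> Fbasis (i + 1)}"
    by (auto simp: Qcomod_def coact2_keys[OF e])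
  then show ?thesis by (simp add: Filt_ind)
qed

lemma finite_Qcoact: "e \<in> cbasis (Qcomod i) \<Longrightarrow> finite (ccoact (Qcomod i) e)"
proof -
  assume "e \<in> cbasis (Qcomod i)"
  then have "e \<in> Amon" by (simp add: Qcomod_def AA1mon_def)
  then show ?thesis using Qcoact by blast
qed

definition f_inc :: "nat \<Rightarrow> mon \<Rightarrow> mon set" where "f_inc j b = {lift (8 * j) b}"

definition f_proj :: "nat \<Rightarrow> mon \<Rightarrow> mon set" where "f_proj j b = (if b \<in> Fbasis j then {} else {b})"

text \<open>The connecting map Q^(j-1) \<rightarrow> Sigma^(8j+9) N_1(j-1), lift (8(j-1)) z * top_mon \<mapsto> z.\<close>

definition f_conn :: "nat \<Rightarrow> mon \<Rightarrow> mon set" where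
  "f_conn j c = (if top_type (8 * (j - 1)) c then {unshift (tau1 c)} else {})"

lemma tensor_id_if: "(\<lambda>(a, c). {(a, d) | d. d \<in> (if P c then {} else {c})})
   = (\<lambda>k. if \<not> P (snd k) then {k} else {})"
  by (auto simp: fun_eq_iff)

lemma tensor_f_conn: "(\<lambda>(a, d). {(a, d') | d'. d' \<in> f_conn j d})
   = (\<lambda>k. if top_type (8 * (j - 1)) (snd k) then {(fst k, unshift (tau1 (snd k)))} else {})"
  by (auto simp: fun_eq_iff f_conn_def)

lemma f_inc_mor: "is_comod_mor (SigmaN1 (8 * j) j) (SigmaN1 0 (2 * j)) (f_inc j)"
proof (rule is_comod_morI)
  fix b assume "b \<in> cbasis (SigmaN1 (8 * j) j)"
  then have bN: "b \<in> N1 j" and bA: "b \<in> AA1mon" "weight b \<le> 4 * j"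
    by (auto simp: SigmaN1_def N1_iff)
  have bAm: "b \<in> Amon" using bA by (simp add: AA1mon_def)
  show "f_inc j b \<subseteq> cbasis (SigmaN1 0 (2 * j))"
    using lift_image_N1 bN by (auto simp: f_inc_def SigmaN1_def)
  show "\<And>c. c \<in> f_inc j b \<Longrightarrow> cdeg (SigmaN1 0 (2 * j)) c = cdeg (SigmaN1 (8 * j) j) b"
    using degree_lift[OF bAm] bA by (simp add: f_inc_def SigmaN1_def)
  show "finite (ccoact (SigmaN1 (8 * j) j) b)" using finite_coact2[OF bAm] by (simp add: SigmaN1_def)
  have "Lin (\<lambda>(a, c). {(a, d) | d. d \<in> f_inc j c}) (ind (ccoact (SigmaN1 (8 * j) j) b))
      = Lmap (lift_right (8 * j)) (pr2 (Cop b))"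
    by (simp add: f_inc_def SigmaN1_def ind_coact2[OF bAm] Lmap_def lift_right_def split_def)
  also have "\<dots> = pr2 (Cop (lift (8 * j) b))"
    using coact_lift[OF bA(1), of "8 * j"] bA by (simp add: lifts_coact_def)
  also have "\<dots> = (\<Sum>d\<in>f_inc j b. ind (ccoact (SigmaN1 0 (2 * j)) d))"
    using bAm by (simp add: f_inc_def SigmaN1_def ind_coact2)
  finally show "Lin (\<lambda>(a, c). {(a, d) | d. d \<in> f_inc j c}) (ind (ccoact (SigmaN1 (8 * j) j) b))
      = (\<Sum>d\<in>f_inc j b. ind (ccoact (SigmaN1 0 (2 * j)) d))" .
qed (auto simp: f_inc_def SigmaN1_def N1_iff AA1mon_def finite_coact2)

text \<open>The projection is a comodule map because F^j is a subcomodule.\<close>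

lemma f_proj_mor:
  assumes j: "j \<ge> 1"
  shows "is_comod_mor (SigmaN1 0 (2 * j)) (Qcomod (j - 1)) (f_proj j)"
proof (rule is_comod_morI)
  have jj: "j - 1 + 1 = j" using j by simp
  fix b assume "b \<in> cbasis (SigmaN1 0 (2 * j))"
  then have bA: "b \<in> AA1mon" by (simp add: SigmaN1_def N1_iff)
  have bAm: "b \<in> Amon" using bA by (simp add: AA1mon_def)
  show "f_proj j b \<subseteq> cbasis (Qcomod (j - 1))" using bA by (auto simp: f_proj_def Qcomod_def jj)
  show "\<And>c. c \<in> f_proj j b \<Longrightarrow> cdeg (Qcomod (j - 1)) c = cdeg (SigmaN1 0 (2 * j)) b"
    by (auto simp: f_proj_def Qcomod_def SigmaN1_def split: if_splits)
  show "finite (ccoact (SigmaN1 0 (2 * j)) b)" using finite_coact2[OF bAm] by (simp add: SigmaN1_def)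
  have "Lin (\<lambda>(a, c). {(a, d) | d. d \<in> f_proj j c}) (ind (ccoact (SigmaN1 0 (2 * j)) b))
      = Filt (\<lambda>k. snd k \<notin> Fbasis j) (pr2 (Cop b))"
    by (simp add: f_proj_def tensor_id_if SigmaN1_def ind_coact2[OF bAm] Filt_def)
  also have "\<dots> = (\<Sum>d\<in>f_proj j b. ind (ccoact (Qcomod (j - 1)) d))"
  proof (cases "b \<in> Fbasis j")
    case True
    have "Filt (\<lambda>k. snd k \<notin> Fbasis j) (pr2 (Cop b)) = 0"
      using Fbasis_subcomodule[OF True] by (intro Filt_zero_if) auto
    then show ?thesis using True by (simp add: f_proj_def)
  next
    case False
    then show ?thesis using Qcoact[OF bAm, of "j - 1"] by (simp add: f_proj_def jj)
  qed
  finally show "Lin (\<lambda>(a, c). {(a, d) | d. d \<in> f_proj j c}) (ind (ccoact (SigmaN1 0 (2 * j)) b))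
      = (\<Sum>d\<in>f_proj j b. ind (ccoact (Qcomod (j - 1)) d))" .
qed (auto simp: f_proj_def finite_Qcoact)

text \<open>The connecting map is a comodule map: on m * top_mon the top-type part of the coaction is
  the coaction on m (coact_top_type), and on every other basis monomial of Q^(j-1) the weight is
  at most 8j, too small for right factors of top type (coact_below_top_type).  It raises degree by
  deg top_mon + 8(j-1) = 8j + 9.\<close>

lemma f_conn_mor:
  assumes j: "j \<ge> 1"
  shows "is_comod_mor (Qcomod (j - 1)) (SigmaN1 (8 * j + 9) (j - 1)) (f_conn j)"
proof (rule is_comod_morI)
  have jj: "j - 1 + 1 = j" using j by simp
  let ?w = "8 * (j - 1)"
  fix c assume "c \<in> cbasis (Qcomod (j - 1))"
  then have cA: "c \<in> AA1mon" "c \<notin> Fbasis j" by (auto simp: Qcomod_def jj)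
  have cAm: "c \<in> Amon" using cA by (simp add: AA1mon_def)
  show "f_conn j c \<subseteq> cbasis (SigmaN1 (8 * j + 9) (j - 1))"
    using top_type_facts(5,6)[of ?w c] by (auto simp: f_conn_def SigmaN1_def N1_iff)
  show "\<And>d. d \<in> f_conn j c \<Longrightarrow> cdeg (SigmaN1 (8 * j + 9) (j - 1)) d = cdeg (Qcomod (j - 1)) c"
    using degree_top_type[of ?w c] j by (auto simp: f_conn_def SigmaN1_def Qcomod_def split: if_splits)
  show "finite (ccoact (Qcomod (j - 1)) c)" using Qcoact[OF cAm] by blast
  have "Lin (\<lambda>(a, d). {(a, d') | d'. d' \<in> f_conn j d}) (ind (ccoact (Qcomod (j - 1)) c))
      = Lmap (\<lambda>k. (fst k, unshift (tau1 (snd k))))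
          (Filt (\<lambda>k. top_type ?w (snd k)) (Filt (\<lambda>k. snd k \<notin> Fbasis j) (pr2 (Cop c))))"
    using Qcoact[OF cAm, of "j - 1"] by (simp add: tensor_f_conn Lin_if_single jj)
  also have "Filt (\<lambda>k. top_type ?w (snd k)) (Filt (\<lambda>k. snd k \<notin> Fbasis j) (pr2 (Cop c)))
      = Filt (\<lambda>k. top_type ?w (snd k)) (pr2 (Cop c))"
    unfolding Filt_Filt2 using top_type_iff[OF j] by (intro Filt_cong) (auto simp: top_type_def)
  also have "Lmap (\<lambda>k. (fst k, unshift (tau1 (snd k)))) (Filt (\<lambda>k. top_type ?w (snd k)) (pr2 (Cop c)))
      = (\<Sum>d\<in>f_conn j c. ind (ccoact (SigmaN1 (8 * j + 9) (j - 1)) d))"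
  proof (cases "top_type ?w c")
    case True
    then show ?thesis
      using coact_top_type[OF True] ind_coact2[OF AA1_Amon[OF top_type_facts(5)[OF True]]]
      by (simp add: f_conn_def SigmaN1_def)
  next
    case False
    then have "weight c \<le> 8 * j" using top_type_iff[OF j cA(1)] cA(2) by auto
    then have "Filt (\<lambda>k. top_type ?w (snd k)) (pr2 (Cop c)) = 0"
      using j by (intro coact_below_top_type[OF cAm]) auto
    then show ?thesis using False by (simp add: f_conn_def Lmap_def)
  qed
  finally show "Lin (\<lambda>(a, d). {(a, d') | d'. d' \<in> f_conn j d}) (ind (ccoact (Qcomod (j - 1)) c))
      = (\<Sum>d\<in>f_conn j c. ind (ccoact (SigmaN1 (8 * j + 9) (j - 1)) d))" .
qed (auto simp: f_conn_def SigmaN1_def N1_iff AA1mon_def finite_coact2)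

text \<open>All three maps send basis monomials to single basis monomials or to 0, injectively on the
  monomials not sent to 0, so on finite sets of monomials they act as images.\<close>

lemma lsum_single: "inj_on \<phi> X \<Longrightarrow> lsum (\<lambda>x. {\<phi> x}) X = \<phi> ` X"
  using lsum_single_inj[of \<phi> X "\<lambda>_. True"] by simp

lemma lsum_f_inc:
  assumes "X \<subseteq> N1 j"
  shows "lsum (f_inc j) X = lift (8 * j) ` X"
proof -
  have "X \<subseteq> Amon" using assms by (auto simp: N1_iff AA1mon_def)
  then show ?thesis unfolding f_inc_def by (intro lsum_single inj_on_subset[OF lift_inj])
qed

lemma lsum_f_proj: "lsum (f_proj j) Y = {y \<in> Y. y \<notin> Fbasis j}"
proof -
  have "f_proj j = (\<lambda>x. if x \<notin> Fbasis j then {id x} else {})" by (auto simp: fun_eq_iff f_proj_def)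
  then have "lsum (f_proj j) Y = id ` {y \<in> Y. y \<notin> Fbasis j}" by (simp add: lsum_single_inj)
  then show ?thesis by simp
qed

lemma lsum_f_conn:
  "lsum (f_conn j) Y = (\<lambda>x. unshift (tau1 x)) ` {y \<in> Y. top_type (8 * (j - 1)) y}"
  unfolding f_conn_def
proof (rule lsum_single_inj)
  show "inj_on (\<lambda>x. unshift (tau1 x)) {y \<in> Y. top_type (8 * (j - 1)) y}"
    by (rule inj_onI) (metis (no_types, lifting) mem_Collect_eq top_type_facts(3,7))
qed

lemma top_type_lift:
  assumes "z \<in> N1 i"
  shows "top_type (8 * i) (lift (8 * i) z + top_mon)" "unshift (tau1 (lift (8 * i) z + top_mon)) = z"
proof -
  have zA: "z \<in> AA1mon" "2 * weight z \<le> 8 * i" using assms by (auto simp: N1_iff)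
  have zAm: "z \<in> Amon" using zA by (simp add: AA1mon_def)
  have m: "lift (8 * i) z \<in> AA2mon" using lift_AA2[OF zA(1) _ zA(2)] by simp
  have t1: "tau1 (lift (8 * i) z + top_mon) = lift (8 * i) z" using tau1_add_AA2[OF m, of top_mon] by simp
  have t2: "tau2 (lift (8 * i) z + top_mon) = top_mon" using tau2_add_AA2[OF m, of top_mon] by simp
  show "top_type (8 * i) (lift (8 * i) z + top_mon)"
    using t1 t2 weight_lift[OF zAm zA(2)] m AA2_AA1 by (auto simp: top_type_def)
  show "unshift (tau1 (lift (8 * i) z + top_mon)) = z" using t1 unshift_lift[OF zAm] by simp
qed

lemma exact_at_source: "X \<in> elems (SigmaN1 (8 * j) j) \<Longrightarrow> lsum (f_inc j) X = {} \<Longrightarrow> X = {}"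
  by (auto simp: elems_def SigmaN1_def lsum_f_inc)

lemma exact_at_N1_2j:
  "lsum (f_inc j) ` elems (SigmaN1 (8 * j) j) = {Y \<in> elems (SigmaN1 0 (2 * j)). lsum (f_proj j) Y = {}}"
proof
  show "lsum (f_inc j) ` elems (SigmaN1 (8 * j) j) \<subseteq> {Y \<in> elems (SigmaN1 0 (2 * j)). lsum (f_proj j) Y = {}}"
    using lift_image_N1 by (auto simp: elems_def SigmaN1_def lsum_f_inc lsum_f_proj)
next
  show "{Y \<in> elems (SigmaN1 0 (2 * j)). lsum (f_proj j) Y = {}} \<subseteq> lsum (f_inc j) ` elems (SigmaN1 (8 * j) j)"
  proof
    fix Y assume "Y \<in> {Y \<in> elems (SigmaN1 0 (2 * j)). lsum (f_proj j) Y = {}}"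
    then have Y: "finite Y" "Y \<subseteq> lift (8 * j) ` N1 j"
      using lift_image_N1 by (auto simp: elems_def SigmaN1_def lsum_f_proj)
    then obtain X where "X \<subseteq> N1 j" "finite X" "Y = lift (8 * j) ` X"
      using finite_subset_image[OF Y] by blast
    then show "Y \<in> lsum (f_inc j) ` elems (SigmaN1 (8 * j) j)"
      by (auto simp: elems_def SigmaN1_def lsum_f_inc intro!: image_eqI[where x = X])
  qed
qed

text \<open>Kernel of the connecting map = monomials of Q^(j-1) of weight at most 8j = image of the
  projection.\<close>

lemma exact_at_Q:
  assumes j: "j \<ge> 1"
  shows "lsum (f_proj j) ` elems (SigmaN1 0 (2 * j)) = {Y \<in> elems (Qcomod (j - 1)). lsum (f_conn j) Y = {}}"
proof -
  have jj: "j - 1 + 1 = j" using j by simp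
  have low: "y \<in> AA1mon \<Longrightarrow> y \<notin> Fbasis j \<Longrightarrow> \<not> top_type (8 * (j - 1)) y \<longleftrightarrow> weight y \<le> 8 * j" for y
    using top_type_iff[OF j, of y] by auto
  have N1_low: "y \<in> N1 (2 * j) \<Longrightarrow> \<not> top_type (8 * (j - 1)) y" for y
    using top_type_iff[OF j, of y] by (auto simp: N1_iff top_type_def)
  show ?thesis
  proof
    show "lsum (f_proj j) ` elems (SigmaN1 0 (2 * j)) \<subseteq> {Y \<in> elems (Qcomod (j - 1)). lsum (f_conn j) Y = {}}"
      using N1_low by (auto simp: elems_def SigmaN1_def Qcomod_def jj lsum_f_proj lsum_f_conn N1_iff)
  next
    show "{Y \<in> elems (Qcomod (j - 1)). lsum (f_conn j) Y = {}} \<subseteq> lsum (f_proj j) ` elems (SigmaN1 0 (2 * j))"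
    proof
      fix Y assume "Y \<in> {Y \<in> elems (Qcomod (j - 1)). lsum (f_conn j) Y = {}}"
      then have Y: "finite Y" "Y \<subseteq> AA1mon - Fbasis j" "\<forall>y\<in>Y. \<not> top_type (8 * (j - 1)) y"
        by (auto simp: elems_def Qcomod_def jj lsum_f_conn)
      have "Y \<subseteq> N1 (2 * j)"
      proof
        fix y assume "y \<in> Y"
        then have y: "y \<in> AA1mon" "y \<notin> Fbasis j" "\<not> top_type (8 * (j - 1)) y" using Y by auto
        then show "y \<in> N1 (2 * j)" using low[OF y(1,2)] by (simp add: N1_iff)
      qed
      moreover have "lsum (f_proj j) Y = Y" using Y by (auto simp: lsum_f_proj)
      ultimately show "Y \<in> lsum (f_proj j) ` elems (SigmaN1 0 (2 * j))"
        using Y by (auto simp: elems_def SigmaN1_def intro!: image_eqI[where x = Y])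
    qed
  qed
qed

text \<open>The connecting map is onto: z = f_conn (lift (8(j-1)) z * top_mon).\<close>

lemma exact_at_target:
  assumes j: "j \<ge> 1"
  shows "lsum (f_conn j) ` elems (Qcomod (j - 1)) = elems (SigmaN1 (8 * j + 9) (j - 1))"
proof
  show "lsum (f_conn j) ` elems (Qcomod (j - 1)) \<subseteq> elems (SigmaN1 (8 * j + 9) (j - 1))"
    using top_type_facts(5,6) by (fastforce simp: elems_def SigmaN1_def lsum_f_conn N1_iff)
next
  show "elems (SigmaN1 (8 * j + 9) (j - 1)) \<subseteq> lsum (f_conn j) ` elems (Qcomod (j - 1))"
  proof
    fix Z assume "Z \<in> elems (SigmaN1 (8 * j + 9) (j - 1))"
    then have Z: "finite Z" "Z \<subseteq> N1 (j - 1)" by (auto simp: elems_def SigmaN1_def)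
    let ?c = "\<lambda>z. lift (8 * (j - 1)) z + top_mon"
    have S: "\<forall>c\<in>?c ` Z. top_type (8 * (j - 1)) c" using top_type_lift(1) Z by auto
    have jj: "j - 1 + 1 = j" using j by simp
    have "?c ` Z \<in> elems (Qcomod (j - 1))"
      using S Z top_type_iff[OF j] by (auto simp: elems_def Qcomod_def jj top_type_def)
    moreover have "lsum (f_conn j) (?c ` Z) = Z"
      using S Z top_type_lift(2) by (force simp: lsum_f_conn image_image)
    ultimately show "Z \<in> lsum (f_conn j) ` elems (Qcomod (j - 1))" by (metis image_eqI)
  qed
qed

lemma exact_sequence:
  assumes "j \<ge> 1"
  shows "exact4 (SigmaN1 (8 * j) j) (SigmaN1 0 (2 * j)) (Qcomod (j - 1))
                (SigmaN1 (8 * j + 9) (j - 1)) (f_inc j) (f_proj j) (f_conn j)"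
  unfolding exact4_def
  using exact_at_source exact_at_N1_2j exact_at_Q[OF assms] exact_at_target[OF assms] by blast

theorem lemma7p2:
  fixes j :: nat
  assumes "j \<ge> 1"
  shows "\<exists>f1 f2 f3.
           is_comod_mor (SigmaN1 (8 * j) j) (SigmaN1 0 (2 * j)) f1
         \<and> is_comod_mor (SigmaN1 0 (2 * j)) (Qcomod (j - 1)) f2
         \<and> is_comod_mor (Qcomod (j - 1)) (SigmaN1 (8 * j + 9) (j - 1)) f3
         \<and> exact4 (SigmaN1 (8 * j) j) (SigmaN1 0 (2 * j)) (Qcomod (j - 1))
                  (SigmaN1 (8 * j + 9) (j - 1)) f1 f2 f3"
  using f_inc_mor[of j] f_proj_mor[OF assms] f_conn_mor[OF assms] exact_sequence[OF assms] by blast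

end
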